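(* Let $\gamma$ be a closed geodesic on $S=\mathbb{D}/\Gamma$. A lift $\widetilde{\gamma}\subset\mathbb{D}$ of $\gamma$ intersects the fundamental domain $\mathcal{P}$ if and only if $\widetilde{\gamma}\in\mathcal{L}_{cyc}(\gamma)$.
   Context: $\mathbb{D}$ is the Poincaré disk with center $O$. For a hyperbolic isometry $h$, $D(h)$ is the closed half-plane bounded by the perpendicular bisector of $[O,h(O)]$ and containing $h(O)$. Let $a,b$ be hyperbolic isometries with inverses $\bar a,\bar b$ such that $[D(a)\cup D(\bar a)]\cap[D(b)\cup D(\bar b)]=\emptyset$; $\Gamma=\langle a,b\rangle$ is a rank-2 Schottky group, $S=\mathbb{D}/\Gamma$ (a pair of pants or a punctured torus), and $\mathcal{P}=\bigcap_{e\in\{a,\bar a,b,\bar b\}}(\mathbb{D}\setminus\mathring{D}(e))$ is a fundamental domain. For a geodesic $\widetilde\gamma$ with endpoints in the limit set meeting $\mathcal{P}$, its coding is the bi-infinite word $(e_n)_{n\in\mathbb{Z}}$ with $g_{n+1}=g_ne_n$, where $(g_n\mathcal{P})$ is the sequence of tiles crossed by $\widetilde\gamma$ and $g_0=\mathrm{Id}$. For a closed geodesic $\gamma$ on $S$ and a lift crossing $\mathcal{P}$, this coding is periodic, $\cdots www\cdots$, with $w=e_1\cdots e_n$ a cyclically reduced word (the coding of $\gamma$). For $i=1,\dots,n$ let $w_i=e_ie_{i+1}\cdots e_ne_1\cdots e_{i-1}$ and let $\widetilde\gamma_i$ be the lift of $\gamma$ whose endpoints are the attracting and repelling fixed points of $w_i\in\Gamma$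 (i.e. with forward endpoint coded by $w_iw_i\cdots$ and backward endpoint by $\bar w_i\bar w_i\cdots$). $\mathcal{L}_{cyc}(\gamma)=\{\widetilde\gamma_1,\dots,\widetilde\gamma_n\}$. *)

theory Defs
  imports "HOL-Analysis.Analysis"
begin

definition disk :: "complex set" where
  "disk = ball 0 1"

definition hdist :: "complex \<Rightarrow> complex \<Rightarrow> real" where
  "hdist z w = arcosh (1 + 2 * (cmod (z - w))^2 / ((1 - (cmod z)^2) * (1 - (cmod w)^2)))"

text \<open>Isometries are represented by matrices [[al, be],[cnj be, cnj al]] in SU(1,1),
  encoded as pairs (al, be) with |al|^2 - |be|^2 = 1.\<close>
type_synonym mat = "complex \<times> complex"

definition su11 :: "mat \<Rightarrow> bool" where
  "su11 m \<longleftrightarrow> (cmod (fst m))^2 - (cmod (snd m))^2 = 1"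

definition moeb :: "mat \<Rightarrow> complex \<Rightarrow> complex" where
  "moeb m z = (fst m * z + snd m) / (cnj (snd m) * z + cnj (fst m))"

definition mmul :: "mat \<Rightarrow> mat \<Rightarrow> mat" where
  "mmul m n = (fst m * fst n + snd m * cnj (snd n), fst m * snd n + snd m * cnj (fst n))"

definition minv :: "mat \<Rightarrow> mat" where
  "minv m = (cnj (fst m), - snd m)"

definition mid :: mat where
  "mid = (1, 0)"

text \<open>Hyperbolic type: |trace| > 2.\<close>
definition hyperbolic_type :: "mat \<Rightarrow> bool" where
  "hyperbolic_type m \<longleftrightarrow> su11 m \<and> \<bar>Re (fst m)\<bar> > 1"

definition Dhalf :: "mat \<Rightarrow> complex set" where
  "Dhalf h = {z \<in> disk. hdist z (moeb h 0) \<le> hdist z 0}"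

datatype letter = A | Ainv | B | Binv

definition letter_mat :: "mat \<Rightarrow> mat \<Rightarrow> letter \<Rightarrow> mat" where
  "letter_mat a b l = (case l of A \<Rightarrow> a | Ainv \<Rightarrow> minv a | B \<Rightarrow> b | Binv \<Rightarrow> minv b)"

definition word_mat :: "mat \<Rightarrow> mat \<Rightarrow> letter list \<Rightarrow> mat" where
  "word_mat a b w = foldr (\<lambda>l m. mmul (letter_mat a b l) m) w mid"

definition schottky :: "mat \<Rightarrow> mat \<Rightarrow> bool" where
  "schottky a b \<longleftrightarrow> hyperbolic_type a \<and> hyperbolic_type b \<and>
     (Dhalf a \<union> Dhalf (minv a)) \<inter> (Dhalf b \<union> Dhalf (minv b)) = {}"

definition Gamma :: "mat \<Rightarrow> mat \<Rightarrow> mat set" where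
  "Gamma a b = {word_mat a b w | w. True}"

definition fundom :: "mat \<Rightarrow> mat \<Rightarrow> complex set" where
  "fundom a b = (\<Inter>e\<in>{a, minv a, b, minv b}. disk - interior (Dhalf e))"

definition tile :: "mat \<Rightarrow> mat \<Rightarrow> mat \<Rightarrow> complex set" where
  "tile a b g = moeb g ` fundom a b"

definition geodesic_param :: "(real \<Rightarrow> complex) \<Rightarrow> complex \<Rightarrow> complex \<Rightarrow> bool" where
  "geodesic_param c p q \<longleftrightarrow>
     (\<forall>t. c t \<in> disk) \<and> (\<forall>s t. hdist (c s) (c t) = \<bar>s - t\<bar>) \<and>
     (c \<longlongrightarrow> q) at_top \<and> (c \<longlongrightarrow> p) at_bot"

definition attracting_fp :: "mat \<Rightarrow> complex" where
  "attracting_fp g = (THE \<xi>. cmod \<xi> = 1 \<and> moeb g \<xi> = \<xi> \<and>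
                        (\<lambda>n. (moeb g ^^ n) 0) \<longlonglongrightarrow> \<xi>)"

definition repelling_fp :: "mat \<Rightarrow> complex" where
  "repelling_fp g = attracting_fp (minv g)"

definition axis :: "mat \<Rightarrow> complex set" where
  "axis g = {z. \<exists>c. geodesic_param c (repelling_fp g) (attracting_fp g) \<and> z \<in> range c}"

text \<open>The closed geodesic gamma on S determined by a nontrivial g in Gamma: its lifts are
  the axes of the conjugates h g h^-1, h in Gamma.\<close>
definition lifts :: "mat \<Rightarrow> mat \<Rightarrow> mat \<Rightarrow> complex set set" where
  "lifts a b g = {axis (mmul (mmul h g) (minv h)) | h. h \<in> Gamma a b}"

definition coding :: "mat \<Rightarrow> mat \<Rightarrow> (real \<Rightarrow> complex) \<Rightarrow> (int \<Rightarrow> letter) \<Rightarrow> bool" where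
  "coding a b c e \<longleftrightarrow>
     (\<exists>s :: int \<Rightarrow> real. \<exists>g :: int \<Rightarrow> mat.
        strict_mono s \<and> filterlim s at_top at_top \<and> filterlim s at_bot at_bot \<and>
        g 0 = mid \<and> (\<forall>n. g (n + 1) = mmul (g n) (letter_mat a b (e n))) \<and>
        (\<forall>n. c ` {s n .. s (n + 1)} \<subseteq> tile a b (g n)))"

definition Lcyc :: "mat \<Rightarrow> mat \<Rightarrow> (int \<Rightarrow> letter) \<Rightarrow> nat \<Rightarrow> complex set set" where
  "Lcyc a b e n = {axis (word_mat a b (rotate i (map (\<lambda>k. e (int k)) [0..<n]))) | i. i < n}"

end

theory Submission
  imports Defs "HOL-Real_Asymp.Real_Asymp"
begin

(* Every lift of gamma is v L_0, where L_0 is the lift through P parametrised by c. The tiles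
   crossed by L_0 are exactly the tiles g_k P of its coding: by ping-pong, two tiles g P and g' P
   meet only if g' = g or g' = g l for a letter l, and then along g applied to a bisector; and a
   lift meeting a bisector at an interior time of a tile would lie in it, which is impossible
   since the translation along L_0 would then stabilise two adjacent tiles. Hence v L_0 meets P
   iff v = g_j^-1 for some j. Periodicity gives g_(k+n) = W g_k, where the matrix W of the period
   word translates L_0 along itself, so g_j^-1 L_0 depends only on j mod n; and g_i^-1 L_0 is
   the axis of g_i^-1 W g_i, the matrix of the cyclic permutation w_i.
   The analytic input is the hyperboloid model: along a geodesic, cosh of the hyperbolic distance
   to a fixed point is A e^t + B e^-t, so tiles are convex along geodesics and a geodesic meeting
   a bisector at two points lies in it. *)

section \<open>The Poincare disk and the action of SU(1,1)\<close>

definition hcosh :: "complex \<Rightarrow> complex \<Rightarrow> real" where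
  "hcosh z w = 1 + 2 * (cmod (z - w))^2 / ((1 - (cmod z)^2) * (1 - (cmod w)^2))"

lemma mem_disk_iff: "z \<in> disk \<longleftrightarrow> cmod z < 1"
  by (simp add: disk_def)

lemma zero_in_disk [simp]: "0 \<in> disk"
  by (simp add: disk_def)

lemma one_minus_norm_sq_pos: "z \<in> disk \<Longrightarrow> 0 < 1 - (cmod z)^2"
  by (simp add: disk_def power_less_one_iff)

lemma hcosh_ge_1: "z \<in> disk \<Longrightarrow> w \<in> disk \<Longrightarrow> 1 \<le> hcosh z w"
  using one_minus_norm_sq_pos[of z] one_minus_norm_sq_pos[of w] by (simp add: hcosh_def)

lemma hdist_eq_arcosh: "hdist z w = arcosh (hcosh z w)"
  by (simp add: hdist_def hcosh_def)

lemma cosh_hdist: "z \<in> disk \<Longrightarrow> w \<in> disk \<Longrightarrow> cosh (hdist z w) = hcosh z w"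
  by (simp add: hdist_eq_arcosh cosh_arcosh_real hcosh_ge_1)

lemma hdist_le_iff:
  assumes "z \<in> disk" "w \<in> disk" "z' \<in> disk" "w' \<in> disk"
  shows "hdist z w \<le> hdist z' w' \<longleftrightarrow> hcosh z w \<le> hcosh z' w'"
  using arcosh_less_iff_real[OF hcosh_ge_1[OF assms(3,4)] hcosh_ge_1[OF assms(1,2)]]
  by (simp add: hdist_eq_arcosh not_less[symmetric])

lemma su11_norm_sq: "su11 m \<Longrightarrow> (cmod (fst m))^2 = 1 + (cmod (snd m))^2"
  by (simp add: su11_def)

lemma su11_cnj: "su11 m \<Longrightarrow> fst m * cnj (fst m) - snd m * cnj (snd m) = 1"
proof -
  assume "su11 m"
  hence "complex_of_real ((cmod (fst m))^2 - (cmod (snd m))^2) = 1" by (simp add: su11_def)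
  thus ?thesis by (simp only: complex_norm_square of_real_diff)
qed

lemma moeb_denom_nonzero:
  assumes "su11 m" "cmod z \<le> 1"
  shows "cnj (snd m) * z + cnj (fst m) \<noteq> 0"
proof
  assume "cnj (snd m) * z + cnj (fst m) = 0"
  hence "cmod (fst m) = cmod (snd m) * cmod z"
    by (metis add_eq_0_iff2 complex_mod_cnj norm_minus_cancel norm_mult)
  also have "\<dots> \<le> cmod (snd m)" using assms(2) by (simp add: mult_left_le)
  finally have "(cmod (fst m))^2 \<le> (cmod (snd m))^2" by (simp add: power_mono)
  thus False using su11_norm_sq[OF assms(1)] by simp
qed

lemma norm_denom_sq_diff:
  assumes "su11 m"
  shows "(cmod (cnj (snd m) * z + cnj (fst m)))^2 - (cmod (fst m * z + snd m))^2 = 1 - (cmod z)^2"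
proof -
  obtain a b where m: "m = (a, b)" by force
  have "(Re a)^2 + (Im a)^2 = 1 + (Re b)^2 + (Im b)^2"
    using su11_norm_sq[OF assms] by (simp add: m cmod_power2)
  thus ?thesis unfolding m cmod_power2
    by (simp add: power2_eq_square algebra_simps) (simp add: power2_eq_square[symmetric]; algebra)
qed

lemma one_minus_norm_moeb_sq:
  assumes "su11 m" "cmod z \<le> 1"
  shows "1 - (cmod (moeb m z))^2 = (1 - (cmod z)^2) / (cmod (cnj (snd m) * z + cnj (fst m)))^2"
proof -
  let ?d = "cnj (snd m) * z + cnj (fst m)" and ?n = "fst m * z + snd m"
  have d: "cmod ?d \<noteq> 0" using moeb_denom_nonzero[OF assms] by simp
  have "1 - (cmod (moeb m z))^2 = ((cmod ?d)^2 - (cmod ?n)^2) / (cmod ?d)^2"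
    using d by (simp add: moeb_def norm_divide power_divide field_simps)
  thus ?thesis using norm_denom_sq_diff[OF assms(1)] by simp
qed

lemma moeb_disk: "su11 m \<Longrightarrow> z \<in> disk \<Longrightarrow> moeb m z \<in> disk"
proof -
  assume a: "su11 m" "z \<in> disk"
  hence z1: "cmod z \<le> 1" by (simp add: mem_disk_iff)
  have "0 < 1 - (cmod (moeb m z))^2"
    using one_minus_norm_moeb_sq[OF a(1) z1] one_minus_norm_sq_pos[OF a(2)]
      moeb_denom_nonzero[OF a(1) z1] by simp
  thus ?thesis by (simp add: mem_disk_iff power_less_one_iff)
qed

lemma moeb_circle: "su11 m \<Longrightarrow> cmod z = 1 \<Longrightarrow> cmod (moeb m z) = 1"
  using one_minus_norm_moeb_sq[of m z] norm_ge_zero[of "moeb m z"] by (simp add: power2_eq_1_iff)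

lemma moeb_cball: "su11 m \<Longrightarrow> cmod z \<le> 1 \<Longrightarrow> cmod (moeb m z) \<le> 1"
  using moeb_disk[of m z] moeb_circle[of m z] by (force simp: mem_disk_iff)

lemma moeb_diff:
  assumes "su11 m" "cmod z \<le> 1" "cmod w \<le> 1"
  shows "moeb m z - moeb m w =
    (z - w) / ((cnj (snd m) * z + cnj (fst m)) * (cnj (snd m) * w + cnj (fst m)))"
proof -
  obtain a b where m: "m = (a, b)" by force
  have s: "a * cnj a - b * cnj b = 1" using su11_cnj[OF assms(1)] by (simp add: m)
  have d1: "cnj b * z + cnj a \<noteq> 0" using moeb_denom_nonzero[OF assms(1,2)] by (simp add: m)
  have d2: "cnj b * w + cnj a \<noteq> 0" using moeb_denom_nonzero[OF assms(1,3)] by (simp add: m)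
  have "(a * z + b) * (cnj b * w + cnj a) - (a * w + b) * (cnj b * z + cnj a)
      = (a * cnj a - b * cnj b) * (z - w)"
    by (simp add: algebra_simps)
  thus ?thesis unfolding m moeb_def using d1 d2 s by (simp add: divide_simps)
qed

lemma hcosh_moeb:
  assumes "su11 m" "z \<in> disk" "w \<in> disk"
  shows "hcosh (moeb m z) (moeb m w) = hcosh z w"
proof -
  let ?dz = "cnj (snd m) * z + cnj (fst m)" and ?dw = "cnj (snd m) * w + cnj (fst m)"
  have z1: "cmod z \<le> 1" and w1: "cmod w \<le> 1" using assms by (auto simp: mem_disk_iff)
  have dz: "cmod ?dz \<noteq> 0" using moeb_denom_nonzero[OF assms(1) z1] by simp
  have dw: "cmod ?dw \<noteq> 0" using moeb_denom_nonzero[OF assms(1) w1] by simp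
  have "(cmod (moeb m z - moeb m w))^2 = (cmod (z - w))^2 / ((cmod ?dz)^2 * (cmod ?dw)^2)"
    by (simp add: moeb_diff[OF assms(1) z1 w1] norm_divide norm_mult power_divide power_mult_distrib)
  moreover have "(1 - (cmod (moeb m z))^2) * (1 - (cmod (moeb m w))^2) =
     ((1 - (cmod z)^2) * (1 - (cmod w)^2)) / ((cmod ?dz)^2 * (cmod ?dw)^2)"
    by (simp add: one_minus_norm_moeb_sq[OF assms(1) z1] one_minus_norm_moeb_sq[OF assms(1) w1])
  ultimately show ?thesis using dz dw by (simp add: hcosh_def)
qed

lemma mmul_assoc: "mmul (mmul x y) z = mmul x (mmul y z)"
  by (simp add: mmul_def algebra_simps)

lemma mmul_mid [simp]: "mmul m mid = m" and mid_mmul [simp]: "mmul mid m = m"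
  by (simp_all add: mmul_def mid_def)

lemma minv_minv [simp]: "minv (minv m) = m"
  by (simp add: minv_def)

lemma minv_mmul: "minv (mmul x y) = mmul (minv y) (minv x)"
  by (simp add: minv_def mmul_def algebra_simps)

lemma minv_mid [simp]: "minv mid = mid"
  by (simp add: minv_def mid_def)

lemma mmul_minv: "su11 m \<Longrightarrow> mmul m (minv m) = mid"
  using su11_cnj[of m] by (simp add: mmul_def minv_def mid_def algebra_simps)

lemma minv_mmul_self: "su11 m \<Longrightarrow> mmul (minv m) m = mid"
  using su11_cnj[of m] by (simp add: mmul_def minv_def mid_def algebra_simps)

lemma mmul_cancel_left: "su11 x \<Longrightarrow> mmul x y = mmul x z \<Longrightarrow> y = z"
  by (metis mid_mmul minv_mmul_self mmul_assoc)

lemma mmul_cancel_right: "su11 x \<Longrightarrow> mmul y x = mmul z x \<Longrightarrow> y = z"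
  by (metis mmul_mid mmul_minv mmul_assoc)

lemma su11_minv: "su11 m \<Longrightarrow> su11 (minv m)"
  by (simp add: su11_def minv_def)

lemma su11_mid: "su11 mid"
  by (simp add: su11_def mid_def)

lemma su11_mmul:
  assumes "su11 m" "su11 n"
  shows "su11 (mmul m n)"
proof -
  obtain a b where m: "m = (a, b)" by force
  obtain c d where n: "n = (c, d)" by force
  let ?x = "a * c + b * cnj d" and ?y = "a * d + b * cnj c"
  have "?x * cnj ?x - ?y * cnj ?y = (a * cnj a - b * cnj b) * (c * cnj c - d * cnj d)"
    by (simp add: algebra_simps)
  also have "\<dots> = 1" using su11_cnj[OF assms(1)] su11_cnj[OF assms(2)] by (simp add: m n)
  finally have "complex_of_real ((cmod ?x)^2 - (cmod ?y)^2) = 1"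
    by (simp only: complex_norm_square[symmetric] of_real_diff)
  hence "(cmod ?x)^2 - (cmod ?y)^2 = 1" using of_real_eq_1_iff by blast
  thus ?thesis by (simp add: su11_def mmul_def m n)
qed

lemma moeb_mid [simp]: "moeb mid z = z"
  by (simp add: moeb_def mid_def)

lemma moeb_mmul:
  assumes "su11 m" "su11 n" "cmod z \<le> 1"
  shows "moeb (mmul m n) z = moeb m (moeb n z)"
proof -
  obtain a b where m: "m = (a, b)" by force
  obtain c d where n: "n = (c, d)" by force
  have dn: "cnj d * z + cnj c \<noteq> 0" using moeb_denom_nonzero[OF assms(2,3)] by (simp add: n)
  have dm: "cnj b * moeb n z + cnj a \<noteq> 0"
    using moeb_denom_nonzero[OF assms(1) moeb_cball[OF assms(2,3)]] by (simp add: m)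
  have "cnj b * (c * z + d) + cnj a * (cnj d * z + cnj c)
      = (cnj b * moeb n z + cnj a) * (cnj d * z + cnj c)"
    using dn by (simp add: n moeb_def field_simps)
  hence "cnj b * (c * z + d) + cnj a * (cnj d * z + cnj c) \<noteq> 0" using dm dn by simp
  thus ?thesis using dn dm unfolding m n moeb_def mmul_def
    by (simp add: divide_simps) (simp add: algebra_simps)
qed

lemma moeb_minv_moeb: "su11 m \<Longrightarrow> cmod z \<le> 1 \<Longrightarrow> moeb (minv m) (moeb m z) = z"
  by (metis moeb_mmul su11_minv minv_mmul_self moeb_mid)

lemma moeb_moeb_minv: "su11 m \<Longrightarrow> cmod z \<le> 1 \<Longrightarrow> moeb m (moeb (minv m) z) = z"
  by (metis moeb_mmul su11_minv mmul_minv moeb_mid)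

lemma moeb_inj_disk: "su11 x \<Longrightarrow> z \<in> disk \<Longrightarrow> w \<in> disk \<Longrightarrow> moeb x z = moeb x w \<Longrightarrow> z = w"
  by (metis moeb_minv_moeb mem_disk_iff less_imp_le)

lemma isCont_moeb: "su11 m \<Longrightarrow> cmod z \<le> 1 \<Longrightarrow> isCont (moeb m) z"
  unfolding moeb_def[abs_def] using moeb_denom_nonzero[of m z]
  by (auto intro!: continuous_intros)

lemma funpow_moeb_disk: "su11 h \<Longrightarrow> z \<in> disk \<Longrightarrow> (moeb h ^^ j) z \<in> disk"
  by (induction j) (auto intro: moeb_disk)

lemma moeb_conj:
  assumes "su11 k" "su11 h" "cmod w \<le> 1"
  shows "moeb (mmul (mmul k h) (minv k)) w = moeb k (moeb h (moeb (minv k) w))"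
  using assms by (simp add: moeb_mmul su11_mmul su11_minv moeb_cball)

lemma minv_conj: "minv (mmul (mmul k h) (minv k)) = mmul (mmul k (minv h)) (minv k)"
  by (simp add: minv_mmul mmul_assoc)

lemma conj_conj:
  "mmul (mmul v (mmul (mmul k g) (minv k))) (minv v) = mmul (mmul (mmul v k) g) (minv (mmul v k))"
  by (simp add: minv_mmul mmul_assoc)

lemma moeb_eq_id_if_fixes_disk:
  assumes g: "su11 g" and fix_disk: "\<And>z. z \<in> disk \<Longrightarrow> moeb g z = z"
  shows "moeb g = id"
proof -
  obtain al be where gg: "g = (al, be)" by force
  have a0: "al \<noteq> 0" using su11_norm_sq[OF g] by (auto simp: gg) (smt (verit) zero_le_power2)
  have b0: "be = 0" using fix_disk[OF zero_in_disk] a0 by (simp add: moeb_def gg)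
  have "moeb g (1/2) = 1/2" using fix_disk by (simp add: disk_def)
  hence "cnj al = al" using a0 b0 by (simp add: moeb_def gg field_simps)
  thus ?thesis using a0 b0 by (auto simp: moeb_def gg)
qed

lemma moeb_conj_eq_id:
  assumes k: "su11 k" and h: "su11 h"
    and fix_disk: "\<And>z. z \<in> disk \<Longrightarrow> moeb (mmul (mmul k h) (minv k)) z = z"
  shows "moeb h = id"
proof (rule moeb_eq_id_if_fixes_disk[OF h])
  fix z assume z: "z \<in> disk"
  hence "moeb k (moeb h z) = moeb k z"
    using fix_disk[OF moeb_disk[OF k z]] moeb_conj[OF k h] moeb_minv_moeb[OF k] moeb_cball[OF k]
    by (simp add: mem_disk_iff)
  thus "moeb h z = z" using moeb_inj_disk[OF k] moeb_disk[OF h z] z by blast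
qed

section \<open>The hyperboloid model\<close>

type_synonym v3 = "real \<times> real \<times> real"

definition minkowski :: "v3 \<Rightarrow> v3 \<Rightarrow> real" where
  "minkowski x y = fst x * fst y - fst (snd x) * fst (snd y) - snd (snd x) * snd (snd y)"

definition hyperboloid :: "complex \<Rightarrow> v3" where
  "hyperboloid z = ((1 + (cmod z)^2) / (1 - (cmod z)^2),
                    2 * Re z / (1 - (cmod z)^2), 2 * Im z / (1 - (cmod z)^2))"

definition from_hyperboloid :: "v3 \<Rightarrow> complex" where
  "from_hyperboloid x = Complex (fst (snd x) / (1 + fst x)) (snd (snd x) / (1 + fst x))"

definition light_vec :: "complex \<Rightarrow> v3" where
  "light_vec q = (1, Re q, Im q)"

lemma minkowski_sym: "minkowski x y = minkowski y x"
  by (simp add: minkowski_def algebra_simps)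

lemma minkowski_add_left [simp]: "minkowski (x + y) z = minkowski x z + minkowski y z"
  and minkowski_add_right [simp]: "minkowski z (x + y) = minkowski z x + minkowski z y"
  and minkowski_diff_left [simp]: "minkowski (x - y) z = minkowski x z - minkowski y z"
  and minkowski_diff_right [simp]: "minkowski z (x - y) = minkowski z x - minkowski z y"
  and minkowski_scaleR_left [simp]: "minkowski (r *\<^sub>R x) z = r * minkowski x z"
  and minkowski_scaleR_right [simp]: "minkowski z (r *\<^sub>R x) = r * minkowski z x"
  and minkowski_zero_left [simp]: "minkowski 0 z = 0"
  by (simp_all add: minkowski_def algebra_simps)

lemma minkowski_light_vec_self: "cmod q = 1 \<Longrightarrow> minkowski (light_vec q) (light_vec q) = 0"
  using cmod_power2[of q] by (simp add: minkowski_def light_vec_def power2_eq_square)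

lemma hcosh_eq_minkowski:
  assumes "z \<in> disk" "w \<in> disk"
  shows "hcosh z w = minkowski (hyperboloid z) (hyperboloid w)"
proof -
  define a where "a = 1 - (cmod z)^2"
  define b where "b = 1 - (cmod w)^2"
  have a0: "a \<noteq> 0" and b0: "b \<noteq> 0"
    using one_minus_norm_sq_pos assms by (simp_all add: a_def b_def less_imp_neq[symmetric])
  have "a * b + 2 * (cmod (z - w))^2
      = (1 + (cmod z)^2) * (1 + (cmod w)^2) - 2 * Re z * (2 * Re w) - 2 * Im z * (2 * Im w)"
    unfolding a_def b_def cmod_power2 by (simp add: power2_eq_square algebra_simps)
  moreover have "minkowski (hyperboloid z) (hyperboloid w) = ((1 + (cmod z)^2) * (1 + (cmod w)^2)
      - 2 * Re z * (2 * Re w) - 2 * Im z * (2 * Im w)) / (a * b)"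
    unfolding minkowski_def hyperboloid_def a_def[symmetric] b_def[symmetric]
    using a0 b0 by (simp add: field_simps)
  moreover have "hcosh z w = (a * b + 2 * (cmod (z - w))^2) / (a * b)"
    unfolding hcosh_def a_def[symmetric] b_def[symmetric] using a0 b0 by (simp add: field_simps)
  ultimately show ?thesis by simp
qed

lemma minkowski_hyperboloid_self: "z \<in> disk \<Longrightarrow> minkowski (hyperboloid z) (hyperboloid z) = 1"
  using hcosh_eq_minkowski[of z z] by (simp add: hcosh_def)

lemma from_hyperboloid_hyperboloid: "z \<in> disk \<Longrightarrow> from_hyperboloid (hyperboloid z) = z"
proof -
  assume "z \<in> disk"
  hence d: "0 < 1 - (cmod z)^2" by (rule one_minus_norm_sq_pos)
  hence "1 + (1 + (cmod z)^2) / (1 - (cmod z)^2) = 2 / (1 - (cmod z)^2)" by (simp add: field_simps)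
  thus ?thesis unfolding from_hyperboloid_def hyperboloid_def using d by (simp add: complex_eq_iff)
qed

lemma hyperboloid_inj: "z \<in> disk \<Longrightarrow> w \<in> disk \<Longrightarrow> hyperboloid z = hyperboloid w \<Longrightarrow> z = w"
  by (metis from_hyperboloid_hyperboloid)

lemma hyperboloid_fst_pos: "z \<in> disk \<Longrightarrow> 0 < fst (hyperboloid z)"
  using one_minus_norm_sq_pos[of z] by (simp add: hyperboloid_def add_pos_nonneg)

lemma scaleR_hyperboloid:
  "z \<in> disk \<Longrightarrow> (1 - (cmod z)^2) *\<^sub>R hyperboloid z = (1 + (cmod z)^2, 2 * Re z, 2 * Im z)"
  using one_minus_norm_sq_pos[of z] by (simp add: hyperboloid_def)

lemma minkowski_orth_null_eq_0:
  assumes "minkowski U U = 1" "minkowski Y U = 0" "minkowski Y Y = 0"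
  shows "Y = 0"
proof -
  obtain u0 u1 u2 where U: "U = (u0, u1, u2)" by (metis prod.collapse)
  obtain y0 y1 y2 where Y: "Y = (y0, y1, y2)" by (metis prod.collapse)
  have h1: "u0^2 = 1 + u1^2 + u2^2" using assms(1) by (simp add: U minkowski_def power2_eq_square)
  have h2: "y0 * u0 = y1 * u1 + y2 * u2" using assms(2) by (simp add: U Y minkowski_def)
  have h3: "y0^2 = y1^2 + y2^2" using assms(3) by (simp add: Y minkowski_def power2_eq_square)
  have "(y1^2 + y2^2) * (u1^2 + u2^2) - (y1 * u1 + y2 * u2)^2 = (y1 * u2 - y2 * u1)^2"
    by (simp add: power2_eq_square algebra_simps)
  hence cauchy_schwarz: "(y1 * u1 + y2 * u2)^2 \<le> (y1^2 + y2^2) * (u1^2 + u2^2)"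
    by (smt (verit) zero_le_power2)
  have "(y1^2 + y2^2) * u0^2 = (y0 * u0)^2" using h3 by (simp add: power_mult_distrib)
  also have "\<dots> \<le> (y1^2 + y2^2) * (u1^2 + u2^2)" using h2 cauchy_schwarz by simp
  finally have "y1^2 + y2^2 \<le> 0" using h1 by (simp add: algebra_simps)
  hence "y1 = 0" "y2 = 0" by (smt (verit) zero_le_power2 zero_eq_power2)+
  with h3 show ?thesis by (simp add: Y zero_prod_def)
qed

lemma minkowski_frame_decomp:
  assumes UU: "minkowski U U = 1" and VV: "minkowski V V = -1" and UV: "minkowski U V = 0"
    and XX: "minkowski X X = 1" and XU: "minkowski X U = x" and XV: "minkowski X V = - y"
    and xy: "x^2 - y^2 = 1"
  shows "X = x *\<^sub>R U + y *\<^sub>R V"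
proof -
  define Y where "Y = X - x *\<^sub>R U - y *\<^sub>R V"
  have VU: "minkowski V U = 0" and UX: "minkowski U X = x" and VX: "minkowski V X = - y"
    using UV XU XV minkowski_sym by metis+
  have "minkowski Y U = 0" using XU UU VU by (simp add: Y_def)
  moreover have "minkowski Y Y = 0"
    using XX XU UX XV VX UU UV VU VV xy by (simp add: Y_def power2_eq_square algebra_simps)
  ultimately have "Y = 0" using minkowski_orth_null_eq_0[OF UU] by blast
  thus ?thesis by (simp add: Y_def algebra_simps)
qed

section \<open>Geodesics\<close>

lemma geodesic_param_in_disk: "geodesic_param c p q \<Longrightarrow> c t \<in> disk"
  by (simp add: geodesic_param_def)

lemma geodesic_param_minkowski:
  assumes "geodesic_param c p q"
  shows "minkowski (hyperboloid (c s)) (hyperboloid (c t)) = cosh (s - t)"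
proof -
  have "hdist (c s) (c t) = \<bar>s - t\<bar>" using assms by (simp add: geodesic_param_def)
  hence "cosh (hdist (c s) (c t)) = cosh (s - t)" by (simp add: cosh_real_abs)
  thus ?thesis using cosh_hdist hcosh_eq_minkowski geodesic_param_in_disk[OF assms] by metis
qed

lemma geodesic_hyperboloid_line:
  assumes g: "geodesic_param c p q"
  obtains U V where "minkowski U U = 1" "minkowski V V = -1" "minkowski U V = 0"
    "\<And>t. hyperboloid (c t) = cosh t *\<^sub>R U + sinh t *\<^sub>R V"
proof -
  define U where "U = hyperboloid (c 0)"
  define W where "W = hyperboloid (c 1)"
  define V where "V = (1 / sinh 1) *\<^sub>R (W - cosh 1 *\<^sub>R U)"
  have s1: "sinh (1::real) \<noteq> 0" by (simp add: sinh_real_zero_iff)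
  have UU: "minkowski U U = 1" and WW: "minkowski W W = 1" and UW: "minkowski U W = cosh 1"
    using geodesic_param_minkowski[OF g, of 0 0] geodesic_param_minkowski[OF g, of 1 1]
      geodesic_param_minkowski[OF g, of 0 1] by (simp_all add: U_def W_def)
  have WU: "minkowski W U = cosh 1" using UW minkowski_sym by metis
  have UV: "minkowski U V = 0" using UU UW s1 by (simp add: V_def)
  have "minkowski V V * (sinh 1)^2 = 1 - (cosh 1)^2"
    unfolding V_def using UU UW WU WW s1 by (simp add: power2_eq_square field_simps)
  hence "(minkowski V V + 1) * (sinh 1)^2 = 0"
    using hyperbolic_pythagoras[of "1::real"] by (simp add: algebra_simps)
  hence VV: "minkowski V V = -1" using s1 by simp
  have "hyperboloid (c t) = cosh t *\<^sub>R U + sinh t *\<^sub>R V" for t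
  proof (rule minkowski_frame_decomp[OF UU VV UV])
    let ?X = "hyperboloid (c t)"
    show "minkowski ?X ?X = 1" using geodesic_param_minkowski[OF g, of t t] by simp
    have XU: "minkowski ?X U = cosh t" using geodesic_param_minkowski[OF g, of t 0] by (simp add: U_def)
    thus "minkowski ?X U = cosh t" .
    have "minkowski ?X W = cosh t * cosh 1 - sinh t * sinh 1"
      using geodesic_param_minkowski[OF g, of t 1] by (simp add: W_def cosh_diff)
    thus "minkowski ?X V = - sinh t" using XU s1 by (simp add: V_def field_simps)
    show "(cosh t)^2 - (sinh t)^2 = 1" by (rule hyperbolic_pythagoras)
  qed
  with that UU VV UV show ?thesis by blast
qed

lemma tendsto_direction:
  fixes f g :: "'a \<Rightarrow> v3"
  assumes "(f \<longlongrightarrow> Av) F" "(g \<longlongrightarrow> Gv) F" "\<forall>\<^sub>F t in F. g t = r t *\<^sub>R f t"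
    "fst Av \<noteq> 0" "F \<noteq> bot"
  shows "Gv = (fst Gv / fst Av) *\<^sub>R Av"
proof -
  have f1: "((\<lambda>t. fst (f t)) \<longlongrightarrow> fst Av) F" using assms(1) by (rule tendsto_fst)
  have g1: "((\<lambda>t. fst (g t)) \<longlongrightarrow> fst Gv) F" using assms(2) by (rule tendsto_fst)
  have "\<forall>\<^sub>F t in F. fst (f t) \<noteq> 0" using f1 assms(4) by (rule tendsto_imp_eventually_ne)
  hence "\<forall>\<^sub>F t in F. r t = fst (g t) / fst (f t)" using assms(3) by eventually_elim simp
  hence "(r \<longlongrightarrow> fst Gv / fst Av) F"
    using tendsto_divide[OF g1 f1 assms(4)] by (simp add: tendsto_cong)
  hence "((\<lambda>t. r t *\<^sub>R f t) \<longlongrightarrow> (fst Gv / fst Av) *\<^sub>R Av) F" using assms(1) by (rule tendsto_scaleR)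
  hence "(g \<longlongrightarrow> (fst Gv / fst Av) *\<^sub>R Av) F" using assms(3) by (simp add: tendsto_cong)
  thus ?thesis using assms(2,5) tendsto_unique by blast
qed

lemma hyperboloid_limit_direction:
  assumes NU: "minkowski N U = 1" and NN: "minkowski N N = 0"
    and cq: "(c \<longlongrightarrow> q) F" and F: "F \<noteq> bot" and disk: "\<And>t. c t \<in> disk"
    and pos: "\<And>t. 0 < r t" and lim: "((\<lambda>t. r t *\<^sub>R hyperboloid (c t)) \<longlongrightarrow> N) F"
  shows "cmod q = 1 \<and> N = fst N *\<^sub>R light_vec q \<and> 0 < fst N"
proof -
  obtain n0 n1 n2 where N: "N = (n0, n1, n2)" by (metis prod.collapse)
  have N0: "fst N \<noteq> 0"
  proof
    assume "fst N = 0"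
    hence "- (n1 * n1) = n2 * n2" using NN by (simp add: N minkowski_def)
    hence "n1 * n1 = 0" "n2 * n2 = 0" using zero_le_square[of n1] zero_le_square[of n2] by linarith+
    hence "N = 0" using \<open>fst N = 0\<close> by (simp add: N zero_prod_def)
    thus False using NU by simp
  qed
  define G where "G = (1 + (cmod q)^2, 2 * Re q, 2 * Im q)"
  have "((\<lambda>t. (1 + (cmod (c t))^2, 2 * Re (c t), 2 * Im (c t))) \<longlongrightarrow> G) F"
    unfolding G_def using cq by (auto intro!: tendsto_intros)
  hence gl: "((\<lambda>t. (1 - (cmod (c t))^2) *\<^sub>R hyperboloid (c t)) \<longlongrightarrow> G) F"
    using scaleR_hyperboloid[OF disk] by simp
  have "\<forall>\<^sub>F t in F. (1 - (cmod (c t))^2) *\<^sub>R hyperboloid (c t)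
      = ((1 - (cmod (c t))^2) / r t) *\<^sub>R (r t *\<^sub>R hyperboloid (c t))"
    using pos by (simp add: less_imp_neq[symmetric])
  from tendsto_direction[OF lim gl this N0 F] have GA: "G = (fst G / fst N) *\<^sub>R N" .
  hence "minkowski G G = 0" using NN by (metis minkowski_scaleR_left minkowski_scaleR_right mult_zero_right)
  moreover have "minkowski G G = (1 + (cmod q)^2)^2 - 4 * ((Re q)^2 + (Im q)^2)"
    by (simp add: G_def minkowski_def power2_eq_square algebra_simps)
  ultimately have "(1 + (cmod q)^2)^2 - 4 * (cmod q)^2 = 0" by (simp add: cmod_power2)
  hence "(1 - (cmod q)^2)^2 = 0" by (simp add: power2_eq_square algebra_simps)
  hence "(cmod q)^2 = 1" by simp
  hence q1: "cmod q = 1" using norm_ge_zero[of q] by (auto simp add: power2_eq_1_iff)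
  hence G2: "G = 2 *\<^sub>R light_vec q" by (simp add: G_def light_vec_def)
  hence "fst G = 2" by (simp add: light_vec_def)
  hence "N = (fst N / 2) *\<^sub>R G" using GA N0 by (simp add: N)
  hence N_light: "N = fst N *\<^sub>R light_vec q" using G2 by simp
  have "0 \<le> fst N"
    using tendsto_lowerbound[OF tendsto_fst[OF lim] _ F] pos hyperboloid_fst_pos[OF disk]
    by (simp add: less_imp_le)
  thus ?thesis using q1 N_light N0 by simp
qed

lemma two_exp_cosh: "2 * exp t * cosh t = exp (2 * t) + 1" for t :: real
  by (simp add: cosh_field_def exp_minus field_simps flip: exp_add)

lemma two_exp_sinh: "2 * exp t * sinh t = exp (2 * t) - 1" for t :: real
  by (simp add: sinh_field_def exp_minus field_simps flip: exp_add)

(* Rescaling by e^-t and e^t, the hyperboloid line cosh t U + sinh t V tends to the null vectors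
   U + V and U - V: these are the light directions of the two ends. *)
lemma geodesic_hyperboloid_endpoints:
  assumes g: "geodesic_param c p q"
  shows "cmod p = 1 \<and> cmod q = 1 \<and> (\<exists>k k'. 0 < k \<and> 0 < k' \<and>
           (\<forall>t. hyperboloid (c t) = (exp t * k / 2) *\<^sub>R light_vec q + (exp (-t) * k' / 2) *\<^sub>R light_vec p))"
proof -
  obtain U V where UU: "minkowski U U = 1" and VV: "minkowski V V = -1" and UV: "minkowski U V = 0"
    and X: "\<And>t. hyperboloid (c t) = cosh t *\<^sub>R U + sinh t *\<^sub>R V"
    using geodesic_hyperboloid_line[OF g] by blast
  have VU: "minkowski V U = 0" using UV minkowski_sym by metis
  have dk: "\<And>t. c t \<in> disk" and cq: "(c \<longlongrightarrow> q) at_top" and cp: "(c \<longlongrightarrow> p) at_bot"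
    using g by (simp_all add: geodesic_param_def)
  have "((\<lambda>t::real. exp (2 * -t)) \<longlongrightarrow> 0) at_top" by real_asymp
  hence "((\<lambda>t. (exp (2 * -t) + 1) *\<^sub>R U + (1 - exp (2 * -t)) *\<^sub>R V)
          \<longlongrightarrow> (0 + 1) *\<^sub>R U + (1 - 0) *\<^sub>R V) at_top"
    by (intro tendsto_intros)
  moreover have "(2 * exp (-t)) *\<^sub>R hyperboloid (c t)
      = (exp (2 * -t) + 1) *\<^sub>R U + (1 - exp (2 * -t)) *\<^sub>R V" for t
    using two_exp_cosh[of "-t"] two_exp_sinh[of "-t"]
    by (simp add: X scaleR_add_right mult.assoc[symmetric])
  ultimately have top: "((\<lambda>t. (2 * exp (-t)) *\<^sub>R hyperboloid (c t)) \<longlongrightarrow> U + V) at_top" by simp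
  have "((\<lambda>t::real. exp (2 * t)) \<longlongrightarrow> 0) at_bot" by real_asymp
  hence "((\<lambda>t. (exp (2 * t) + 1) *\<^sub>R U + (exp (2 * t) - 1) *\<^sub>R V)
          \<longlongrightarrow> (0 + 1) *\<^sub>R U + (0 - 1) *\<^sub>R V) at_bot"
    by (intro tendsto_intros)
  moreover have "(2 * exp t) *\<^sub>R hyperboloid (c t)
      = (exp (2 * t) + 1) *\<^sub>R U + (exp (2 * t) - 1) *\<^sub>R V" for t
    using two_exp_cosh[of t] two_exp_sinh[of t] by (simp add: X scaleR_add_right mult.assoc[symmetric])
  ultimately have bot: "((\<lambda>t. (2 * exp t) *\<^sub>R hyperboloid (c t)) \<longlongrightarrow> U - V) at_bot" by simp
  have e1: "cmod q = 1 \<and> U + V = fst (U + V) *\<^sub>R light_vec q \<and> 0 < fst (U + V)"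
    by (rule hyperboloid_limit_direction[where U = U, OF _ _ cq trivial_limit_at_top_linorder dk _ top])
       (simp_all add: UU UV VU VV)
  have e2: "cmod p = 1 \<and> U - V = fst (U - V) *\<^sub>R light_vec p \<and> 0 < fst (U - V)"
    by (rule hyperboloid_limit_direction[where U = U, OF _ _ cp trivial_limit_at_bot_linorder dk _ bot])
       (simp_all add: UU UV VU VV)
  have "hyperboloid (c t) = (exp t / 2) *\<^sub>R (U + V) + (exp (-t) / 2) *\<^sub>R (U - V)" for t
    unfolding X cosh_field_def sinh_field_def by (simp add: algebra_simps scaleR_add_right
        scaleR_diff_right scaleR_add_left scaleR_diff_left add_divide_distrib diff_divide_distrib)
  hence "hyperboloid (c t) = (exp t * fst (U + V) / 2) *\<^sub>R light_vec q
                            + (exp (-t) * fst (U - V) / 2) *\<^sub>R light_vec p" for t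
    using e1 e2 by (metis (no_types, lifting) scaleR_scaleR times_divide_eq_left mult.commute)
  thus ?thesis using e1 e2 by blast
qed

lemma geodesic_light_decomposition:
  assumes g: "geodesic_param c p q"
  obtains k k' where "0 < k" "0 < k'" "cmod p = 1" "cmod q = 1"
    "\<And>t. hyperboloid (c t) = (exp t * k / 2) *\<^sub>R light_vec q + (exp (-t) * k' / 2) *\<^sub>R light_vec p"
    "k * k' * minkowski (light_vec q) (light_vec p) = 2"
proof -
  obtain k k' where k: "0 < k" "0 < k'" and p1: "cmod p = 1" and q1: "cmod q = 1"
    and X: "\<And>t. hyperboloid (c t) = (exp t * k / 2) *\<^sub>R light_vec q + (exp (-t) * k' / 2) *\<^sub>R light_vec p"
    using geodesic_hyperboloid_endpoints[OF g] by blast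
  have "1 = minkowski (hyperboloid (c 0)) (hyperboloid (c 0))"
    using minkowski_hyperboloid_self geodesic_param_in_disk[OF g] by metis
  also have "\<dots> = k * k' * minkowski (light_vec q) (light_vec p) / 2"
    using X[of 0] minkowski_light_vec_self[OF q1] minkowski_light_vec_self[OF p1]
      minkowski_sym[of "light_vec p" "light_vec q"] by (simp add: algebra_simps)
  finally show ?thesis using that k p1 q1 X by simp
qed

lemma geodesic_param_ends_on_circle: "geodesic_param c p q \<Longrightarrow> cmod p = 1 \<and> cmod q = 1"
  using geodesic_light_decomposition by metis

lemma geodesic_param_ends_distinct: "geodesic_param c p q \<Longrightarrow> p \<noteq> q"
  using geodesic_light_decomposition minkowski_light_vec_self by (metis mult_zero_right zero_neq_numeral)

lemma geodesic_param_same_ends_shift: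
  assumes g1: "geodesic_param c p q" and g2: "geodesic_param c' p q"
  obtains \<tau> where "\<And>t. c' t = c (t + \<tau>)"
proof -
  obtain k1 k1' where k1: "0 < k1" "0 < k1'"
    and X1: "\<And>t. hyperboloid (c t) = (exp t * k1 / 2) *\<^sub>R light_vec q + (exp (-t) * k1' / 2) *\<^sub>R light_vec p"
    and B1: "k1 * k1' * minkowski (light_vec q) (light_vec p) = 2"
    using geodesic_light_decomposition[OF g1] by metis
  obtain k2 k2' where k2: "0 < k2" "0 < k2'"
    and X2: "\<And>t. hyperboloid (c' t) = (exp t * k2 / 2) *\<^sub>R light_vec q + (exp (-t) * k2' / 2) *\<^sub>R light_vec p"
    and B2: "k2 * k2' * minkowski (light_vec q) (light_vec p) = 2"
    using geodesic_light_decomposition[OF g2] by metis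
  have kk: "k1 * k1' = k2 * k2'" using B1 B2 by (metis mult_cancel_right zero_neq_numeral mult_zero_right)
  define \<tau> where "\<tau> = ln (k2 / k1)"
  have et: "exp \<tau> = k2 / k1" using k1 k2 by (simp add: \<tau>_def)
  have "c' t = c (t + \<tau>)" for t
  proof -
    have a: "exp (t + \<tau>) * k1 = exp t * k2" using et k1 by (simp add: exp_add)
    have "exp (- (t + \<tau>)) = exp (-t) / exp \<tau>" by (simp add: exp_diff[symmetric])
    hence "exp (- (t + \<tau>)) * k1' = exp (-t) * (k1 * k1' / k2)" using et k1 k2 by simp
    hence b: "exp (- (t + \<tau>)) * k1' = exp (-t) * k2'" using kk k2 by simp
    have "hyperboloid (c (t + \<tau>)) = hyperboloid (c' t)" unfolding X1 X2 using a b
      by (metis (no_types, lifting) minus_add_distrib times_divide_eq_left)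
    thus ?thesis using hyperboloid_inj geodesic_param_in_disk g1 g2 by metis
  qed
  thus ?thesis by (rule that)
qed

lemma hcosh_diff_along_geodesic:
  assumes g: "geodesic_param c p q" and "z0 \<in> disk" "z1 \<in> disk"
  obtains \<alpha> \<beta> where "\<And>t. hcosh (c t) z0 - hcosh (c t) z1 = \<alpha> * exp t + \<beta> * exp (-t)"
proof -
  obtain k k' where
    X: "\<And>t. hyperboloid (c t) = (exp t * k / 2) *\<^sub>R light_vec q + (exp (-t) * k' / 2) *\<^sub>R light_vec p"
    using geodesic_light_decomposition[OF g] by metis
  have "hcosh (c t) z0 - hcosh (c t) z1 =
     (k / 2 * (minkowski (light_vec q) (hyperboloid z0) - minkowski (light_vec q) (hyperboloid z1))) * exp t
     + (k' / 2 * (minkowski (light_vec p) (hyperboloid z0) - minkowski (light_vec p) (hyperboloid z1))) * exp (-t)"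
    for t
    using hcosh_eq_minkowski[OF geodesic_param_in_disk[OF g]] assms(2,3) X[of t]
    by (simp add: algebra_simps)
  thus ?thesis by (rule that)
qed

lemma exp_comb_eq: "\<alpha> * exp u + \<beta> * exp (-u) = exp (-u) * (\<alpha> * exp (2 * u) + \<beta>)" for u :: real
  by (simp add: exp_minus field_simps flip: exp_add)

lemma exp_comb_nonneg_between:
  fixes \<alpha> \<beta> :: real
  assumes "t1 \<le> t" "t \<le> t2" "0 \<le> \<alpha> * exp t1 + \<beta> * exp (-t1)" "0 \<le> \<alpha> * exp t2 + \<beta> * exp (-t2)"
  shows "0 \<le> \<alpha> * exp t + \<beta> * exp (-t)"
proof -
  have l1: "0 \<le> \<alpha> * exp (2 * t1) + \<beta>" and l2: "0 \<le> \<alpha> * exp (2 * t2) + \<beta>"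
    using assms(3,4) by (simp_all add: exp_comb_eq zero_le_mult_iff)
  have "0 \<le> \<alpha> * exp (2 * t) + \<beta>"
  proof (cases "\<alpha> \<ge> 0")
    case True
    hence "\<alpha> * exp (2 * t1) \<le> \<alpha> * exp (2 * t)" using assms(1) by (simp add: mult_left_mono)
    thus ?thesis using l1 by linarith
  next
    case False
    hence "\<alpha> * exp (2 * t2) \<le> \<alpha> * exp (2 * t)" using assms(2) by (simp add: mult_left_mono_neg)
    thus ?thesis using l2 by linarith
  qed
  thus ?thesis by (simp add: exp_comb_eq)
qed

lemma exp_comb_zero_between:
  fixes \<alpha> \<beta> :: real
  assumes "t1 < t" "t < t2" "0 \<le> \<alpha> * exp t1 + \<beta> * exp (-t1)" "0 \<le> \<alpha> * exp t2 + \<beta> * exp (-t2)"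
    "\<alpha> * exp t + \<beta> * exp (-t) = 0"
  shows "\<alpha> = 0 \<and> \<beta> = 0"
proof -
  have l1: "0 \<le> \<alpha> * exp (2 * t1) + \<beta>" and l2: "0 \<le> \<alpha> * exp (2 * t2) + \<beta>"
    and l: "\<alpha> * exp (2 * t) + \<beta> = 0"
    using assms(3-5) by (simp_all add: exp_comb_eq zero_le_mult_iff)
  have "0 \<le> \<alpha> * (exp (2 * t1) - exp (2 * t))" using l1 l by (simp add: algebra_simps)
  hence "\<alpha> \<le> 0" using assms(1) by (simp add: zero_le_mult_iff)
  moreover have "0 \<le> \<alpha> * (exp (2 * t2) - exp (2 * t))" using l2 l by (simp add: algebra_simps)
  hence "\<alpha> \<ge> 0" using assms(2) by (simp add: zero_le_mult_iff)
  ultimately show ?thesis using l by simp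
qed

lemma exp_comb_two_zeros:
  fixes \<alpha> \<beta> :: real
  assumes "u \<noteq> t" "\<alpha> * exp u + \<beta> * exp (-u) = 0" "\<alpha> * exp t + \<beta> * exp (-t) = 0"
  shows "\<alpha> = 0 \<and> \<beta> = 0"
proof -
  have a: "\<alpha> * exp (2 * u) + \<beta> = 0" and b: "\<alpha> * exp (2 * t) + \<beta> = 0"
    using assms(2,3) by (simp_all add: exp_comb_eq)
  hence "\<alpha> * (exp (2 * u) - exp (2 * t)) = 0" by (simp only: right_diff_distrib)
  moreover have "exp (2 * u) \<noteq> exp (2 * t)" using assms(1) by simp
  ultimately have "\<alpha> = 0" by simp
  thus ?thesis using a by simp
qed

lemma geodesic_param_moeb:
  assumes g: "geodesic_param c p q" and m: "su11 m"
  shows "geodesic_param (\<lambda>t. moeb m (c t)) (moeb m p) (moeb m q)"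
proof -
  have "cmod p \<le> 1" "cmod q \<le> 1" using geodesic_param_ends_on_circle[OF g] by auto
  moreover have "(c \<longlongrightarrow> q) at_top" "(c \<longlongrightarrow> p) at_bot" using g by (simp_all add: geodesic_param_def)
  ultimately have "((\<lambda>t. moeb m (c t)) \<longlongrightarrow> moeb m q) at_top" "((\<lambda>t. moeb m (c t)) \<longlongrightarrow> moeb m p) at_bot"
    using isCont_tendsto_compose isCont_moeb[OF m] by blast+
  moreover have "\<forall>t. moeb m (c t) \<in> disk" using moeb_disk[OF m] geodesic_param_in_disk[OF g] by blast
  moreover have "\<forall>s t. hdist (moeb m (c s)) (moeb m (c t)) = \<bar>s - t\<bar>"
    using hcosh_moeb[OF m] geodesic_param_in_disk[OF g] g
    by (simp add: geodesic_param_def hdist_eq_arcosh)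
  ultimately show ?thesis by (simp add: geodesic_param_def)
qed

lemma norm_diff_sq_le_hcosh:
  assumes "z \<in> disk" "y \<in> disk"
  shows "(cmod (z - y))^2 \<le> (hcosh z y - 1) / 2 * (1 - (cmod z)^2)"
proof -
  have pz: "0 < 1 - (cmod z)^2" and py: "0 < 1 - (cmod y)^2"
    using one_minus_norm_sq_pos assms by auto
  have "(cmod (z - y))^2 = (hcosh z y - 1) / 2 * ((1 - (cmod z)^2) * (1 - (cmod y)^2))"
    using pz py by (simp add: hcosh_def)
  also have "\<dots> \<le> (hcosh z y - 1) / 2 * (1 - (cmod z)^2)"
    using hcosh_ge_1[OF assms] pz py by (intro mult_left_mono) (simp_all add: mult_left_le)
  finally show ?thesis .
qed

lemma tendsto_if_hcosh_bounded:
  assumes zq: "(z \<longlongrightarrow> q) F" and q1: "cmod q = 1" and zd: "\<And>x. z x \<in> disk" and yd: "\<And>x. y x \<in> disk"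
    and M: "\<And>x. hcosh (z x) (y x) \<le> M"
  shows "(y \<longlongrightarrow> q) F"
proof -
  have "((\<lambda>x. (M - 1) / 2 * (1 - (cmod (z x))^2)) \<longlongrightarrow> (M - 1) / 2 * (1 - (cmod q)^2)) F"
    using zq by (intro tendsto_intros)
  hence w: "((\<lambda>x. (M - 1) / 2 * (1 - (cmod (z x))^2)) \<longlongrightarrow> 0) F" using q1 by simp
  have "(cmod (z x - y x))^2 \<le> (M - 1) / 2 * (1 - (cmod (z x))^2)" for x
    using norm_diff_sq_le_hcosh[OF zd yd, of x x] M[of x] one_minus_norm_sq_pos[OF zd, of x]
    by (smt (verit, best) divide_right_mono mult_right_mono)
  hence "((\<lambda>x. (cmod (z x - y x))^2) \<longlongrightarrow> 0) F"
    by (intro tendsto_sandwich[OF _ _ tendsto_const w]) (simp_all add: always_eventually)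
  hence "((\<lambda>x. sqrt ((cmod (z x - y x))^2)) \<longlongrightarrow> sqrt 0) F" by (rule tendsto_real_sqrt)
  hence "((\<lambda>x. z x - y x) \<longlongrightarrow> 0) F" by (simp add: tendsto_norm_zero_iff)
  hence "((\<lambda>x. z x - (z x - y x)) \<longlongrightarrow> q - 0) F" using zq by (intro tendsto_diff)
  thus ?thesis by simp
qed

lemma geodesic_param_reverse:
  assumes g: "geodesic_param c p q"
  shows "geodesic_param (\<lambda>t. c (- t)) q p"
proof -
  have "(c \<longlongrightarrow> q) at_top" "(c \<longlongrightarrow> p) at_bot" using g by (simp_all add: geodesic_param_def)
  hence "((\<lambda>t. c (- t)) \<longlongrightarrow> q) at_bot" "((\<lambda>t. c (- t)) \<longlongrightarrow> p) at_top"
    using filterlim_compose filterlim_uminus_at_top_at_bot filterlim_uminus_at_bot_at_top by blast+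
  moreover have "hdist (c (- s)) (c (- t)) = \<bar>s - t\<bar>" for s t
    using g by (simp add: geodesic_param_def abs_minus_commute)
  ultimately show ?thesis using g by (simp add: geodesic_param_def)
qed

section \<open>Attracting fixed points\<close>

definition attractor :: "mat \<Rightarrow> complex \<Rightarrow> bool" where
  "attractor h \<xi> \<longleftrightarrow>
     cmod \<xi> = 1 \<and> moeb h \<xi> = \<xi> \<and> (\<forall>z\<in>disk. (\<lambda>j. (moeb h ^^ j) z) \<longlonglongrightarrow> \<xi>)"

lemma attracting_fp_eqI: "attractor h \<xi> \<Longrightarrow> attracting_fp h = \<xi>"
  unfolding attracting_fp_def attractor_def by (rule the_equality) (auto intro: LIMSEQ_unique)

lemma repelling_fp_eqI: "attractor (minv h) \<xi> \<Longrightarrow> repelling_fp h = \<xi>"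
  by (simp add: repelling_fp_def attracting_fp_eqI)

lemma moeb_fixed_eq:
  assumes "su11 h" "cmod \<xi> \<le> 1" "moeb h \<xi> = \<xi>"
  shows "fst h * \<xi> + snd h = \<xi> * (cnj (snd h) * \<xi> + cnj (fst h))"
  using assms moeb_denom_nonzero[OF assms(1,2)] by (simp add: moeb_def divide_eq_eq mult.commute)

lemma moeb_minus_fixed:
  assumes h: "su11 h" and "cmod \<xi> \<le> 1" "moeb h \<xi> = \<xi>" and z1: "cmod z \<le> 1"
  shows "moeb h z - \<xi> = (fst h - cnj (snd h) * \<xi>) * (z - \<xi>) / (cnj (snd h) * z + cnj (fst h))"
proof -
  have "snd h = \<xi> * (cnj (snd h) * \<xi> + cnj (fst h)) - fst h * \<xi>"
    using moeb_fixed_eq[OF assms(1-3)] by (simp add: algebra_simps)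
  hence "fst h * z + snd h - \<xi> * (cnj (snd h) * z + cnj (fst h)) = (fst h - cnj (snd h) * \<xi>) * (z - \<xi>)"
    by (simp add: algebra_simps)
  thus ?thesis using moeb_denom_nonzero[OF h z1] by (simp add: moeb_def field_simps)
qed

lemma su11_norm_snd_sq: "su11 h \<Longrightarrow> (cmod (snd h))^2 = (Re (fst h))^2 + (Im (fst h))^2 - 1"
  using su11_norm_sq[of h] cmod_power2[of "fst h"] by simp

lemma Im_fixed_point_on_circle:
  assumes h: "su11 h" and x1: "cmod \<xi> = 1" and fx: "moeb h \<xi> = \<xi>"
  shows "Im (cnj (snd h) * \<xi>) = Im (fst h)"
proof -
  have xx: "\<xi> * cnj \<xi> = 1" using x1 by (simp add: complex_norm_square[symmetric])
  have "(fst h * \<xi> + snd h) * cnj \<xi> = (\<xi> * (cnj (snd h) * \<xi> + cnj (fst h))) * cnj \<xi>"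
    using moeb_fixed_eq[OF h _ fx] x1 by simp
  hence "fst h * (\<xi> * cnj \<xi>) + snd h * cnj \<xi> = (\<xi> * cnj \<xi>) * (cnj (snd h) * \<xi> + cnj (fst h))"
    by (simp add: algebra_simps)
  hence "fst h + snd h * cnj \<xi> = cnj (snd h) * \<xi> + cnj (fst h)" using xx by simp
  hence "Im (fst h + snd h * cnj \<xi>) = Im (cnj (snd h) * \<xi> + cnj (fst h))" by simp
  hence "Im (fst h) - Im (cnj (snd h) * \<xi>) = Im (cnj (snd h) * \<xi>) - Im (fst h)"
    by (simp add: algebra_simps)
  thus ?thesis by (simp add: algebra_simps)
qed

lemma elliptic_no_fixed_on_circle:
  assumes h: "su11 h" and t: "\<bar>Re (fst h)\<bar> < 1" and x1: "cmod \<xi> = 1" and fx: "moeb h \<xi> = \<xi>"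
  shows False
proof -
  let ?u = "cnj (snd h) * \<xi>"
  have "(cmod ?u)^2 = (Re (fst h))^2 + (Im (fst h))^2 - 1"
    using x1 su11_norm_snd_sq[OF h] by (simp add: norm_mult)
  also have "\<dots> < (Im ?u)^2" using t Im_fixed_point_on_circle[OF assms(1,3,4)] by (simp add: abs_square_less_1)
  finally show False using cmod_power2[of ?u] by simp
qed

lemma fixed_point_formula:
  assumes h: "su11 h" and b: "snd h \<noteq> 0" and rho: "\<rho>^2 = (Re (fst h))^2 - 1"
    and tr: "Re (fst h) + \<rho> \<noteq> 0"
    and xi: "\<xi> = (\<i> * of_real (Im (fst h)) + of_real \<rho>) / cnj (snd h)"
  shows "cmod \<xi> = 1" "moeb h \<xi> = \<xi>" "fst h - cnj (snd h) * \<xi> = of_real (Re (fst h) - \<rho>)"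
    "cnj (snd h) * \<xi> + cnj (fst h) = of_real (Re (fst h) + \<rho>)"
proof -
  obtain a be where hh: "h = (a, be)" by force
  let ?s = "Im a"
  have b0: "be \<noteq> 0" using b by (simp add: hh)
  have u: "cnj be * \<xi> = \<i> * of_real ?s + of_real \<rho>" using b0 by (simp add: xi hh)
  have nb: "(cmod be)^2 = ?s^2 + \<rho>^2" using su11_norm_snd_sq[OF h] rho by (simp add: hh)
  show e1: "fst h - cnj (snd h) * \<xi> = of_real (Re (fst h) - \<rho>)"
    and e2: "cnj (snd h) * \<xi> + cnj (fst h) = of_real (Re (fst h) + \<rho>)"
    using u by (simp_all add: hh complex_eq_iff)
  have "(cmod (cnj be * \<xi>))^2 = ?s^2 + \<rho>^2" using u by (simp add: cmod_power2)
  hence "(cmod be)^2 * (cmod \<xi>)^2 = (cmod be)^2" using nb by (simp add: norm_mult power_mult_distrib)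
  hence "(cmod \<xi>)^2 = 1" using b0 by simp
  thus "cmod \<xi> = 1" using norm_ge_zero[of \<xi>] by (auto simp: power2_eq_1_iff)
  have "(\<i> * of_real ?s - of_real \<rho>) * (cnj be * \<xi>)
      = (\<i> * of_real ?s - of_real \<rho>) * (\<i> * of_real ?s + of_real \<rho>)"
    by (simp only: u)
  also have "\<dots> = - complex_of_real (?s^2 + \<rho>^2)"
    by (simp add: complex_eq_iff power2_eq_square algebra_simps)
  also have "\<dots> = - complex_of_real ((cmod be)^2)" using nb by simp
  finally have "(\<i> * of_real ?s - of_real \<rho>) * \<xi> * cnj be = - be * cnj be"
    by (simp add: complex_norm_square[symmetric] algebra_simps)
  hence "((\<i> * of_real ?s - of_real \<rho>) * \<xi>) * cnj be = (- be) * cnj be" by simp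
  hence "(\<i> * of_real ?s - of_real \<rho>) * \<xi> = - be"
    using b0 by (metis mult_cancel_right complex_cnj_zero_iff)
  moreover have aa: "a = of_real (Re a) + \<i> * of_real ?s" by (simp add: complex_eq_iff)
  ultimately have "a * \<xi> + be = of_real (Re a + \<rho>) * \<xi>" unfolding of_real_add by algebra
  moreover have "cnj be * \<xi> + cnj a = of_real (Re a + \<rho>)" using e2 by (simp add: hh)
  ultimately show "moeb h \<xi> = \<xi>" using tr by (simp add: moeb_def hh del: of_real_add)
qed

(* Parabolic dynamics: in the coordinate 1 / (z - xi), h is a translation. *)
lemma attractor_of_translation:
  assumes h: "su11 h" and x1: "cmod \<xi> = 1" and fx: "moeb h \<xi> = \<xi>" and k0: "\<kappa> \<noteq> 0"
    and step: "\<And>z. z \<in> disk \<Longrightarrow> inverse (moeb h z - \<xi>) = inverse (z - \<xi>) + \<kappa>"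
  shows "attractor h \<xi>"
proof -
  have iter: "inverse ((moeb h ^^ j) z - \<xi>) = inverse (z - \<xi>) + of_nat j * \<kappa>" if z: "z \<in> disk" for z j
    by (induction j) (simp_all add: step[OF funpow_moeb_disk[OF h z]] algebra_simps)
  have "(\<lambda>j. (moeb h ^^ j) z) \<longlonglongrightarrow> \<xi>" if z: "z \<in> disk" for z
  proof -
    have "filterlim (\<lambda>j. inverse (z - \<xi>) + \<kappa> * of_nat j) at_infinity sequentially"
      by (intro tendsto_add_filterlim_at_infinity[OF tendsto_const]
          tendsto_mult_filterlim_at_infinity[OF tendsto_const k0 tendsto_of_nat])
    hence "(\<lambda>j. inverse (inverse (z - \<xi>) + \<kappa> * of_nat j)) \<longlonglongrightarrow> 0"
      using filterlim_compose[OF tendsto_inverse_0, of "\<lambda>j. inverse (z - \<xi>) + \<kappa> * of_nat j"]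
      by (simp add: o_def)
    moreover have "inverse (inverse (z - \<xi>) + \<kappa> * of_nat j) = (moeb h ^^ j) z - \<xi>" for j
      using iter[OF z, of j] by (metis inverse_inverse_eq mult.commute)
    ultimately have "(\<lambda>j. ((moeb h ^^ j) z - \<xi>) + \<xi>) \<longlonglongrightarrow> 0 + \<xi>"
      by (intro tendsto_add) simp_all
    thus ?thesis by simp
  qed
  thus ?thesis using x1 fx by (simp add: attractor_def)
qed

(* Hyperbolic dynamics: the cross-ratio (z - xp) / (z - xm) is multiplied by K at each step. *)
lemma attractor_of_ratio_contraction:
  assumes h: "su11 h" and p1: "cmod xp = 1" and m1: "cmod xm = 1" and pm: "xp \<noteq> xm"
    and fx: "moeb h xp = xp" and K: "norm K < 1"
    and step: "\<And>z. z \<in> disk \<Longrightarrow> (moeb h z - xp) / (moeb h z - xm) = K * ((z - xp) / (z - xm))"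
  shows "attractor h xp"
proof -
  define R where "R y = (y - xp) / (y - xm)" for y
  have iter: "R ((moeb h ^^ j) z) = K ^ j * R z" if z: "z \<in> disk" for z j
    by (induction j) (simp_all add: R_def step[OF funpow_moeb_disk[OF h z]])
  have inv: "y = (xp - R y * xm) / (1 - R y)" if y: "y \<in> disk" for y
  proof -
    have ym: "y - xm \<noteq> 0" using y m1 by (auto simp: mem_disk_iff)
    have "1 - R y = (xp - xm) / (y - xm)" "xp - R y * xm = y * (xp - xm) / (y - xm)"
      unfolding R_def using ym by (simp_all add: field_simps)
    thus ?thesis using ym pm by simp
  qed
  have "(\<lambda>j. (moeb h ^^ j) z) \<longlonglongrightarrow> xp" if z: "z \<in> disk" for z
  proof -
    have "(\<lambda>j. K ^ j) \<longlonglongrightarrow> 0" using LIMSEQ_power_zero[OF K] .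
    hence Rl: "(\<lambda>j. K ^ j * R z) \<longlonglongrightarrow> 0 * R z" by (intro tendsto_mult tendsto_const)
    have "(\<lambda>j. (xp - (K ^ j * R z) * xm) / (1 - K ^ j * R z)) \<longlonglongrightarrow> (xp - (0 * R z) * xm) / (1 - 0 * R z)"
      by (intro tendsto_intros Rl) simp
    thus ?thesis using inv[OF funpow_moeb_disk[OF h z]] iter[OF z] by simp
  qed
  thus ?thesis using p1 fx by (simp add: attractor_def)
qed

lemma parabolic_attractor:
  assumes h: "su11 h" and b: "snd h \<noteq> 0" and t: "(Re (fst h))^2 = 1"
  shows "attractor h ((\<i> * of_real (Im (fst h)) + of_real 0) / cnj (snd h))"
proof -
  define \<xi> where "\<xi> = (\<i> * of_real (Im (fst h)) + of_real 0) / cnj (snd h)"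
  define tt where "tt = Re (fst h)"
  have t0: "tt \<noteq> 0" using t by (auto simp: tt_def)
  have g1: "cmod \<xi> = 1" and g2: "moeb h \<xi> = \<xi>" and g3: "fst h - cnj (snd h) * \<xi> = of_real tt"
    and g4: "cnj (snd h) * \<xi> + cnj (fst h) = of_real tt"
    using fixed_point_formula[OF h b, of 0 \<xi>] t t0 by (simp_all add: \<xi>_def tt_def)
  show ?thesis unfolding \<xi>_def[symmetric]
  proof (rule attractor_of_translation[OF h g1 g2])
    show "cnj (snd h) / of_real tt \<noteq> 0" using b t0 by simp
    fix z assume z: "z \<in> disk"
    hence z1: "cmod z \<le> 1" and zx: "z - \<xi> \<noteq> 0" using g1 by (auto simp: mem_disk_iff)
    have "moeb h z - \<xi> = of_real tt * (z - \<xi>) / (cnj (snd h) * z + cnj (fst h))"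
      using moeb_minus_fixed[OF h _ g2 z1] g1 g3 by simp
    moreover have "cnj (snd h) * z + cnj (fst h) = cnj (snd h) * (z - \<xi>) + of_real tt"
      using g4 by (simp add: algebra_simps)
    ultimately show "inverse (moeb h z - \<xi>) = inverse (z - \<xi>) + cnj (snd h) / of_real tt"
      using zx t0 by (simp add: inverse_eq_divide field_simps)
  qed
qed

lemma su11_snd_nonzero:
  assumes "su11 h" "1 < \<bar>Re (fst h)\<bar>"
  shows "snd h \<noteq> 0"
proof
  assume "snd h = 0"
  hence "(Re (fst h))^2 + (Im (fst h))^2 = 1" using su11_norm_snd_sq[OF assms(1)] by simp
  moreover have "1 < (Re (fst h))^2" using one_less_power[OF assms(2), of 2] by simp
  ultimately show False by (smt (verit) zero_le_power2)
qed

lemma divide_cancel_common_denom: "(d::'a::field) \<noteq> 0 \<Longrightarrow> (a * x / d) / (c * y / d) = (a / c) * (x / y)"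
  by (simp add: divide_simps)

lemma hyperbolic_attractor:
  assumes h: "su11 h" and t: "1 < Re (fst h)"
  shows "attractor h ((\<i> * of_real (Im (fst h)) + of_real (sqrt ((Re (fst h))^2 - 1))) / cnj (snd h))"
proof -
  define tt where "tt = Re (fst h)"
  define r where "r = sqrt (tt^2 - 1)"
  define xp where "xp = (\<i> * of_real (Im (fst h)) + of_real r) / cnj (snd h)"
  define xm where "xm = (\<i> * of_real (Im (fst h)) + of_real (-r)) / cnj (snd h)"
  have t1: "1 < tt" using t by (simp add: tt_def)
  have r2: "r^2 = tt^2 - 1" and r0: "0 < r" using t1 by (simp_all add: r_def)
  have "r^2 < tt^2" using r2 by simp
  hence rt: "r < tt" using t1 r0 by (smt (verit) power_mono)
  have b: "snd h \<noteq> 0" using su11_snd_nonzero[OF h] t by simp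
  have P: "cmod xp = 1" "moeb h xp = xp" "fst h - cnj (snd h) * xp = of_real (tt - r)"
    using fixed_point_formula[OF h b, of r xp] r2 rt r0 by (simp_all add: xp_def tt_def)
  have M: "cmod xm = 1" "moeb h xm = xm" "fst h - cnj (snd h) * xm = of_real (tt + r)"
    using fixed_point_formula[OF h b, of "-r" xm] r2 rt r0 by (simp_all add: xm_def tt_def)
  have pm: "xp \<noteq> xm"
  proof
    assume "xp = xm"
    hence "\<i> * of_real (Im (fst h)) + of_real r = \<i> * of_real (Im (fst h)) + of_real (-r)"
      using b by (simp add: xp_def xm_def)
    thus False using r0 by (simp add: complex_eq_iff)
  qed
  show ?thesis unfolding tt_def[symmetric] r_def[symmetric] xp_def[symmetric]
  proof (rule attractor_of_ratio_contraction[OF h P(1) M(1) pm P(2)])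
    have "\<bar>(tt - r) / (tt + r)\<bar> < 1" using rt r0 by (simp add: abs_less_iff divide_less_eq less_divide_eq)
    thus "norm (complex_of_real ((tt - r) / (tt + r))) < 1" by (simp only: norm_of_real)
    fix z assume "z \<in> disk"
    hence z1: "cmod z \<le> 1" by (simp add: mem_disk_iff)
    let ?d = "cnj (snd h) * z + cnj (fst h)"
    have "moeb h z - xp = of_real (tt - r) * (z - xp) / ?d" "moeb h z - xm = of_real (tt + r) * (z - xm) / ?d"
      using moeb_minus_fixed[OF h _ P(2) z1] moeb_minus_fixed[OF h _ M(2) z1] P M by simp_all
    hence "(moeb h z - xp) / (moeb h z - xm)
        = (of_real (tt - r) * (z - xp) / ?d) / (of_real (tt + r) * (z - xm) / ?d)" by simp
    also have "\<dots> = (of_real (tt - r) / of_real (tt + r)) * ((z - xp) / (z - xm))"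
      by (rule divide_cancel_common_denom[OF moeb_denom_nonzero[OF h z1]])
    finally show "(moeb h z - xp) / (moeb h z - xm) = of_real ((tt - r) / (tt + r)) * ((z - xp) / (z - xm))"
      by simp
  qed
qed

definition mneg :: "mat \<Rightarrow> mat" where
  "mneg m = (- fst m, - snd m)"

lemma moeb_mneg: "moeb (mneg m) = moeb m"
proof
  fix z
  have "- fst m * z + - snd m = - (fst m * z + snd m)"
    and "cnj (- snd m) * z + cnj (- fst m) = - (cnj (snd m) * z + cnj (fst m))" by simp_all
  hence "(- fst m * z + - snd m) / (cnj (- snd m) * z + cnj (- fst m))
      = (fst m * z + snd m) / (cnj (snd m) * z + cnj (fst m))"
    by (simp only: minus_divide_divide)
  thus "moeb (mneg m) z = moeb m z" by (simp add: moeb_def mneg_def)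
qed

lemma attractor_exists_hyperbolic:
  assumes h: "su11 h" and t: "1 < \<bar>Re (fst h)\<bar>"
  obtains \<xi> where "attractor h \<xi>"
proof (cases "1 < Re (fst h)")
  case True
  thus ?thesis using hyperbolic_attractor[OF h] that by blast
next
  case False
  hence "1 < Re (fst (mneg h))" using t by (simp add: mneg_def)
  moreover have "su11 (mneg h)" using h by (simp add: su11_def mneg_def)
  ultimately show ?thesis using hyperbolic_attractor that by (metis attractor_def moeb_mneg)
qed

(* Without a boundary fixed point, attracting_fp h is the junk value THE xi. False. *)
lemma attracting_fp_no_fixed:
  "(\<And>\<xi>. cmod \<xi> = 1 \<Longrightarrow> moeb h \<xi> \<noteq> \<xi>) \<Longrightarrow> attracting_fp h = (THE \<xi>. False)"
  unfolding attracting_fp_def by metis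

lemma axis_ends_attractors:
  assumes h: "su11 h" and nid: "\<exists>z\<in>disk. moeb h z \<noteq> z"
    and g: "geodesic_param c (repelling_fp h) (attracting_fp h)"
  shows "attractor h (attracting_fp h) \<and> attractor (minv h) (repelling_fp h)"
proof -
  have hi: "su11 (minv h)" and tinv: "Re (fst (minv h)) = Re (fst h)"
    using su11_minv[OF h] by (simp_all add: minv_def)
  have ne: "repelling_fp h \<noteq> attracting_fp h" using geodesic_param_ends_distinct[OF g] .
  consider "1 < \<bar>Re (fst h)\<bar>" | "\<bar>Re (fst h)\<bar> < 1" | "(Re (fst h))^2 = 1"
    by (metis abs_le_square_iff abs_square_eq_1 linorder_neqE_linordered_idom power_one)
  thus ?thesis
  proof cases
    case 1
    obtain x1 x2 where "attractor h x1" "attractor (minv h) x2"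
      using attractor_exists_hyperbolic[OF h 1] attractor_exists_hyperbolic[OF hi] 1 tinv by metis
    thus ?thesis using attracting_fp_eqI repelling_fp_eqI by metis
  next
    case 2
    have "attracting_fp h = (THE \<xi>. False)"
      using elliptic_no_fixed_on_circle[OF h 2] by (intro attracting_fp_no_fixed) blast
    moreover have "repelling_fp h = (THE \<xi>. False)"
      using elliptic_no_fixed_on_circle[OF hi] 2 tinv unfolding repelling_fp_def
      by (intro attracting_fp_no_fixed) auto
    ultimately show ?thesis using ne by simp
  next
    case 3
    have "snd h \<noteq> 0"
    proof
      assume b: "snd h = 0"
      hence "(cmod (fst h))^2 = 1" using su11_norm_sq[OF h] by simp
      hence "Im (fst h) = 0" "fst h \<noteq> 0" using 3 cmod_power2[of "fst h"] by auto
      hence "cnj (fst h) = fst h" by (simp add: complex_eq_iff)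
      hence "moeb h z = z" for z using b \<open>fst h \<noteq> 0\<close> by (simp add: moeb_def)
      thus False using nid by simp
    qed
    hence "attracting_fp h = repelling_fp h"
      using attracting_fp_eqI[OF parabolic_attractor[OF h]] repelling_fp_eqI[OF parabolic_attractor[OF hi]]
        3 tinv by (simp add: minv_def)
    thus ?thesis using ne by simp
  qed
qed

lemma attractor_conj:
  assumes k: "su11 k" and h: "su11 h" and n: "attractor h \<xi>"
  shows "attractor (mmul (mmul k h) (minv k)) (moeb k \<xi>)"
proof -
  let ?g = "mmul (mmul k h) (minv k)"
  have ki: "su11 (minv k)" using su11_minv[OF k] .
  have x1: "cmod \<xi> = 1" and fx: "moeb h \<xi> = \<xi>"
    and cv: "\<And>z. z \<in> disk \<Longrightarrow> (\<lambda>j. (moeb h ^^ j) z) \<longlonglongrightarrow> \<xi>"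
    using n by (auto simp: attractor_def)
  have c1: "cmod (moeb k \<xi>) = 1" using moeb_circle[OF k x1] .
  have c2: "moeb ?g (moeb k \<xi>) = moeb k \<xi>"
    using moeb_conj[OF k h, of "moeb k \<xi>"] c1 moeb_minv_moeb[OF k, of \<xi>] x1 fx by simp
  have it: "(moeb ?g ^^ j) z = moeb k ((moeb h ^^ j) (moeb (minv k) z))" if z: "z \<in> disk" for z j
  proof (induction j)
    case 0 thus ?case using moeb_moeb_minv[OF k, of z] z by (simp add: mem_disk_iff)
  next
    case (Suc j)
    have "(moeb h ^^ j) (moeb (minv k) z) \<in> disk" using funpow_moeb_disk[OF h moeb_disk[OF ki z]] .
    thus ?case using Suc moeb_conj[OF k h] moeb_minv_moeb[OF k] moeb_cball[OF k]
      by (simp add: mem_disk_iff)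
  qed
  have "(\<lambda>j. (moeb ?g ^^ j) z) \<longlonglongrightarrow> moeb k \<xi>" if z: "z \<in> disk" for z
    unfolding it[OF z] using cv[OF moeb_disk[OF ki z]] isCont_tendsto_compose isCont_moeb[OF k] x1
    by (metis order_refl)
  thus ?thesis using c1 c2 by (simp add: attractor_def)
qed

lemma axis_eq_range:
  assumes "attractor h q" "attractor (minv h) p" and g: "geodesic_param c p q"
  shows "axis h = range c"
proof
  show "axis h \<subseteq> range c"
  proof
    fix z assume "z \<in> axis h"
    then obtain c' where g': "geodesic_param c' p q" and z: "z \<in> range c'"
      using assms by (auto simp: axis_def attracting_fp_eqI repelling_fp_eqI)
    obtain \<tau> where "\<And>t. c' t = c (t + \<tau>)" using geodesic_param_same_ends_shift[OF g g'] by metis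
    thus "z \<in> range c" using z by auto
  qed
  show "range c \<subseteq> axis h" using assms by (auto simp: axis_def attracting_fp_eqI repelling_fp_eqI)
qed

lemma axis_conj:
  assumes g: "geodesic_param c p q" and k: "su11 k" and X: "su11 X"
    and "attractor X q" "attractor (minv X) p"
  shows "axis (mmul (mmul k X) (minv k)) = moeb k ` range c"
proof -
  have "attractor (mmul (mmul k X) (minv k)) (moeb k q)"
    and "attractor (minv (mmul (mmul k X) (minv k))) (moeb k p)"
    using attractor_conj[OF k X] attractor_conj[OF k su11_minv[OF X]] assms(4,5)
    by (simp_all add: minv_conj)
  thus ?thesis using axis_eq_range geodesic_param_moeb[OF g k] by (simp add: image_image)
qed

lemma commuting_fixes_attractor:
  assumes X: "su11 X" and W: "su11 W" and comm: "mmul X W = mmul W X" and "attractor X \<xi>"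
  shows "moeb W \<xi> = \<xi>"
proof -
  have x1: "cmod \<xi> = 1" and cv: "\<And>z. z \<in> disk \<Longrightarrow> (\<lambda>j. (moeb X ^^ j) z) \<longlonglongrightarrow> \<xi>"
    using assms(4) by (auto simp: attractor_def)
  have "(moeb X ^^ j) (moeb W 0) = moeb W ((moeb X ^^ j) 0)" for j
  proof (induction j)
    case (Suc j)
    have "cmod ((moeb X ^^ j) 0) \<le> 1"
      using funpow_moeb_disk[OF X zero_in_disk] by (simp add: mem_disk_iff less_imp_le)
    thus ?case using Suc moeb_mmul[OF X W] moeb_mmul[OF W X] comm by simp
  qed simp
  moreover have "(\<lambda>j. (moeb X ^^ j) (moeb W 0)) \<longlonglongrightarrow> \<xi>"
    using cv moeb_disk[OF W zero_in_disk] by blast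
  moreover have "(\<lambda>j. moeb W ((moeb X ^^ j) 0)) \<longlonglongrightarrow> moeb W \<xi>"
    using isCont_tendsto_compose[OF isCont_moeb[OF W] cv[OF zero_in_disk]] x1 by simp
  ultimately show ?thesis using LIMSEQ_unique by simp
qed

(* If W translates a geodesic by tau > 0, the orbit of c 0 runs to the forward end, and every
   other orbit stays at bounded distance from it. *)
lemma attractor_from_shift:
  assumes W: "su11 W" and g: "geodesic_param c p q" and fx: "moeb W q = q"
    and \<tau>: "0 < \<tau>" and sh: "\<And>t. moeb W (c t) = c (t + \<tau>)"
  shows "attractor W q"
proof -
  have cd: "\<And>t. c t \<in> disk" and q1: "cmod q = 1"
    using geodesic_param_in_disk[OF g] geodesic_param_ends_on_circle[OF g] by auto
  have it: "(moeb W ^^ j) (c 0) = c (real j * \<tau>)" for j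
    by (induction j) (simp_all add: sh algebra_simps)
  have "filterlim (\<lambda>j. real j * \<tau>) at_top sequentially"
    using filterlim_tendsto_pos_mult_at_top[OF tendsto_const \<tau> filterlim_real_sequentially]
    by (simp add: mult.commute)
  hence lim: "(\<lambda>j. (moeb W ^^ j) (c 0)) \<longlonglongrightarrow> q"
    using filterlim_compose[of c "nhds q" at_top] g it by (simp add: geodesic_param_def)
  have "(\<lambda>j. (moeb W ^^ j) z) \<longlonglongrightarrow> q" if z: "z \<in> disk" for z
  proof (rule tendsto_if_hcosh_bounded[OF lim q1])
    show "(moeb W ^^ j) (c 0) \<in> disk" "(moeb W ^^ j) z \<in> disk" for j
      using funpow_moeb_disk[OF W] cd z by auto
    show "hcosh ((moeb W ^^ j) (c 0)) ((moeb W ^^ j) z) \<le> hcosh (c 0) z" for j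
      by (induction j) (simp_all add: hcosh_moeb[OF W] funpow_moeb_disk[OF W] cd z)
  qed
  thus ?thesis using q1 fx by (simp add: attractor_def)
qed

section \<open>Reduced words\<close>

fun inv_letter :: "letter \<Rightarrow> letter" where
  "inv_letter A = Ainv" | "inv_letter Ainv = A" | "inv_letter B = Binv" | "inv_letter Binv = B"

lemma inv_inv_letter [simp]: "inv_letter (inv_letter l) = l"
  by (cases l) auto

lemma inv_letter_neq [simp]: "inv_letter l \<noteq> l"
  by (cases l) auto

fun reduced :: "letter list \<Rightarrow> bool" where
  "reduced [] = True"
| "reduced [x] = True"
| "reduced (x # y # r) = (y \<noteq> inv_letter x \<and> reduced (y # r))"

lemma reduced_Cons_tl: "reduced (x # r) \<Longrightarrow> reduced r"
  by (cases r) auto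

lemma reduced_snoc: "reduced (xs @ [y]) \<longleftrightarrow> reduced xs \<and> (xs \<noteq> [] \<longrightarrow> y \<noteq> inv_letter (last xs))"
  by (induction xs rule: reduced.induct) auto

lemma reduced_map_upt:
  assumes "\<And>m. Suc m < d \<Longrightarrow> f (Suc m) \<noteq> inv_letter (f m)"
  shows "reduced (map f [0..<d])"
  using assms
proof (induction d)
  case (Suc d)
  have ih: "reduced (map f [0..<d])" using Suc by simp
  show ?case
  proof (cases d)
    case (Suc d')
    have "map f [0..<Suc d] = map f [0..<d] @ [f d]" by simp
    moreover have "f d \<noteq> inv_letter (f d')" using Suc.prems[of d'] Suc by simp
    moreover have "last (map f [0..<d]) = f d'" "map f [0..<d] \<noteq> []" using Suc by simp_all
    ultimately show ?thesis using ih by (simp only: reduced_snoc) simp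
  qed simp
qed simp

fun reduce :: "letter list \<Rightarrow> letter list" where
  "reduce [] = []"
| "reduce (x # w) =
     (case reduce w of [] \<Rightarrow> [x] | y # r \<Rightarrow> if y = inv_letter x then r else x # y # r)"

lemma reduced_reduce: "reduced (reduce w)"
  by (induction w) (auto split: list.split dest: reduced_Cons_tl)

definition word_inv :: "letter list \<Rightarrow> letter list" where
  "word_inv w = rev (map inv_letter w)"

section \<open>Schottky groups and the ping-pong lemma\<close>

locale schottky_pair =
  fixes a b :: mat
  assumes schottky: "schottky a b"
begin

abbreviation lm :: "letter \<Rightarrow> mat" where "lm \<equiv> letter_mat a b"
abbreviation wm :: "letter list \<Rightarrow> mat" where "wm \<equiv> word_mat a b"

lemma su11_lm: "su11 (lm l)"
  using schottky by (cases l) (auto simp: schottky_def letter_mat_def hyperbolic_type_def su11_minv)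

lemma Re_lm: "1 < \<bar>Re (fst (lm l))\<bar>"
  using schottky by (cases l) (auto simp: schottky_def letter_mat_def hyperbolic_type_def minv_def)

lemma lm_inv_letter: "lm (inv_letter l) = minv (lm l)"
  by (cases l) (auto simp: letter_mat_def)

lemma wm_Nil [simp]: "wm [] = mid"
  by (simp add: word_mat_def)

lemma wm_Cons: "wm (l # w) = mmul (lm l) (wm w)"
  by (simp add: word_mat_def)

lemma wm_single: "wm [l] = lm l"
  by (simp add: wm_Cons)

lemma wm_append: "wm (u @ v) = mmul (wm u) (wm v)"
  by (induction u) (simp_all add: wm_Cons mmul_assoc)

lemma su11_wm: "su11 (wm w)"
  by (induction w) (simp_all add: wm_Cons su11_mid su11_mmul su11_lm)

lemma wm_word_inv: "wm (word_inv w) = minv (wm w)"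
  by (induction w) (simp_all add: word_inv_def wm_append wm_single wm_Cons lm_inv_letter minv_mmul)

lemma wm_reduce: "wm (reduce w) = wm w"
proof (induction w)
  case (Cons x w)
  show ?case
  proof (cases "reduce w")
    case (Cons y r)
    show ?thesis
    proof (cases "y = inv_letter x")
      case True
      have "wm (x # w) = mmul (lm x) (mmul (lm y) (wm r))" using Cons.IH Cons by (simp add: wm_Cons)
      also have "\<dots> = wm r" using True by (simp add: lm_inv_letter mmul_assoc[symmetric] mmul_minv su11_lm)
      finally show ?thesis using True Cons by simp
    qed (use Cons.IH Cons in \<open>simp add: wm_Cons\<close>)
  qed (use Cons.IH in \<open>simp add: wm_Cons\<close>)
qed simp

lemma Gamma_wm: "wm w \<in> Gamma a b"
  by (auto simp: Gamma_def)

lemma Gamma_E: "x \<in> Gamma a b \<Longrightarrow> \<exists>w. x = wm w"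
  by (auto simp: Gamma_def)

lemma Gamma_lm: "lm l \<in> Gamma a b"
  using Gamma_wm[of "[l]"] by (simp add: wm_single)

lemma Gamma_mmul: "x \<in> Gamma a b \<Longrightarrow> y \<in> Gamma a b \<Longrightarrow> mmul x y \<in> Gamma a b"
  by (metis Gamma_E Gamma_wm wm_append)

lemma Gamma_minv: "x \<in> Gamma a b \<Longrightarrow> minv x \<in> Gamma a b"
  by (metis Gamma_E Gamma_wm wm_word_inv)

lemma Gamma_su11: "x \<in> Gamma a b \<Longrightarrow> su11 x"
  using Gamma_E su11_wm by blast

(* Dcl l is the Dirichlet half-plane D(lm l), Dopen l its interior, and Pdom the fundamental
   domain; see Dhalf_lm, interior_Dhalf_lm and fundom_eq_Pdom. *)
definition image0 :: "letter \<Rightarrow> complex" where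
  "image0 l = moeb (lm l) 0"

definition Dcl :: "letter \<Rightarrow> complex set" where
  "Dcl l = {z \<in> disk. hcosh z (image0 l) \<le> hcosh z 0}"

definition Dopen :: "letter \<Rightarrow> complex set" where
  "Dopen l = {z \<in> disk. hcosh z (image0 l) < hcosh z 0}"

definition Pdom :: "complex set" where
  "Pdom = {z \<in> disk. \<forall>l. z \<notin> Dopen l}"

definition bisector :: "letter \<Rightarrow> complex set" where
  "bisector l = Dcl l - Dopen l"

lemma image0_disk: "image0 l \<in> disk"
  by (simp add: image0_def moeb_disk su11_lm)

end

lemma hcosh_zero: "y \<in> disk \<Longrightarrow> hcosh y 0 = 2 / (1 - (cmod y)^2) - 1"
  using one_minus_norm_sq_pos[of y] by (simp add: hcosh_def field_simps)

lemma hcosh_image0_diff: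
  assumes m: "su11 m" and z: "z \<in> disk"
  shows "hcosh z (moeb m 0) - hcosh z 0
    = 2 * ((cmod (cnj (snd m) * z - fst m))^2 - 1) / (1 - (cmod z)^2)"
proof -
  have mi: "su11 (minv m)" using su11_minv[OF m] .
  have z1: "cmod z \<le> 1" using z by (simp add: mem_disk_iff)
  define y where "y = moeb (minv m) z"
  have yd: "y \<in> disk" using moeb_disk[OF mi z] by (simp add: y_def)
  have "hcosh z (moeb m 0) = hcosh y (moeb (minv m) (moeb m 0))"
    using hcosh_moeb[OF mi z moeb_disk[OF m zero_in_disk]] by (simp add: y_def)
  hence q1: "hcosh z (moeb m 0) = hcosh y 0" using moeb_minv_moeb[OF m] by simp
  define d where "d = cnj (snd m) * z - fst m"
  have dn: "cmod d \<noteq> 0" using moeb_denom_nonzero[OF mi z1] by (simp add: d_def minv_def)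
  have "1 - (cmod y)^2 = (1 - (cmod z)^2) / (cmod d)^2"
    using one_minus_norm_moeb_sq[OF mi z1] by (simp add: y_def d_def minv_def norm_minus_commute)
  hence "hcosh y 0 = 2 / ((1 - (cmod z)^2) / (cmod d)^2) - 1" using hcosh_zero[OF yd] by simp
  also have "\<dots> = 2 * (cmod d)^2 / (1 - (cmod z)^2) - 1" using dn by simp
  finally have "hcosh y 0 = 2 * (cmod d)^2 / (1 - (cmod z)^2) - 1" .
  thus ?thesis using q1 hcosh_zero[OF z] one_minus_norm_sq_pos[OF z] by (simp add: d_def field_simps)
qed

lemma not_in_interior_norm_affine_le_1:
  assumes be: "\<beta> \<noteq> 0" and eq: "cmod (\<beta> * z - \<alpha>) = 1"
  shows "z \<notin> interior {w. cmod (\<beta> * w - \<alpha>) \<le> 1}"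
proof
  assume "z \<in> interior {w. cmod (\<beta> * w - \<alpha>) \<le> 1}"
  then obtain e where e: "0 < e" "ball z e \<subseteq> {w. cmod (\<beta> * w - \<alpha>) \<le> 1}"
    using mem_interior by blast
  define v where "v = z - \<alpha> / \<beta>"
  have v0: "v \<noteq> 0" using eq be by (auto simp: v_def field_simps)
  define \<epsilon> where "\<epsilon> = e / (2 * cmod v)"
  have ep: "0 < \<epsilon>" using e v0 by (simp add: \<epsilon>_def)
  have "dist z (z + of_real \<epsilon> * v) = \<epsilon> * cmod v" using ep by (simp add: dist_norm norm_mult)
  also have "\<dots> < e" using e v0 by (simp add: \<epsilon>_def)
  finally have "dist z (z + of_real \<epsilon> * v) < e" .
  hence "z + of_real \<epsilon> * v \<in> ball z e" by simp
  hence "cmod (\<beta> * (z + of_real \<epsilon> * v) - \<alpha>) \<le> 1" using e(2) by blast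
  moreover have "\<beta> * (z + of_real \<epsilon> * v) - \<alpha> = (1 + of_real \<epsilon>) * (\<beta> * z - \<alpha>)"
    using be by (simp add: v_def field_simps)
  moreover have "cmod (1 + complex_of_real \<epsilon>) = 1 + \<epsilon>"
    using ep by (metis abs_of_pos add_pos_pos norm_of_real of_real_1 of_real_add zero_less_one)
  ultimately show False using eq ep by (simp add: norm_mult)
qed

context schottky_pair
begin

lemma hcosh_image0_compare:
  assumes z: "z \<in> disk"
  shows "hcosh z (image0 l) \<le> hcosh z 0 \<longleftrightarrow> cmod (cnj (snd (lm l)) * z - fst (lm l)) \<le> 1"
    and "hcosh z (image0 l) < hcosh z 0 \<longleftrightarrow> cmod (cnj (snd (lm l)) * z - fst (lm l)) < 1"
proof -
  let ?N = "cmod (cnj (snd (lm l)) * z - fst (lm l))"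
  have e: "hcosh z (image0 l) - hcosh z 0 = 2 * (?N^2 - 1) / (1 - (cmod z)^2)"
    using hcosh_image0_diff[OF su11_lm z] by (simp add: image0_def)
  have pz: "0 < 1 - (cmod z)^2" using one_minus_norm_sq_pos[OF z] .
  have "hcosh z (image0 l) \<le> hcosh z 0 \<longleftrightarrow> 2 * (?N^2 - 1) / (1 - (cmod z)^2) \<le> 0"
    using e by linarith
  also have "\<dots> \<longleftrightarrow> ?N^2 \<le> 1" using pz by (simp add: divide_le_0_iff)
  also have "\<dots> \<longleftrightarrow> ?N \<le> 1" by (simp add: power_le_one_iff)
  finally show "hcosh z (image0 l) \<le> hcosh z 0 \<longleftrightarrow> ?N \<le> 1" .
  have "hcosh z (image0 l) < hcosh z 0 \<longleftrightarrow> 2 * (?N^2 - 1) / (1 - (cmod z)^2) < 0"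
    using e by linarith
  also have "\<dots> \<longleftrightarrow> ?N^2 < 1" using pz by (simp add: divide_less_0_iff)
  also have "\<dots> \<longleftrightarrow> ?N < 1" by (simp add: power_less_one_iff)
  finally show "hcosh z (image0 l) < hcosh z 0 \<longleftrightarrow> ?N < 1" .
qed

lemma Dcl_iff: "z \<in> Dcl l \<longleftrightarrow> z \<in> disk \<and> cmod (cnj (snd (lm l)) * z - fst (lm l)) \<le> 1"
  using hcosh_image0_compare(1) by (auto simp: Dcl_def)

lemma Dopen_iff: "z \<in> Dopen l \<longleftrightarrow> z \<in> disk \<and> cmod (cnj (snd (lm l)) * z - fst (lm l)) < 1"
  using hcosh_image0_compare(2) by (auto simp: Dopen_def)

lemma Dopen_subset_Dcl: "Dopen l \<subseteq> Dcl l"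
  by (auto simp: Dopen_def Dcl_def)

lemma bisector_subset_Dcl: "bisector l \<subseteq> Dcl l"
  by (auto simp: bisector_def)

lemma bisector_subset_disk: "bisector l \<subseteq> disk"
  by (auto simp: bisector_def Dcl_def)

lemma Pdom_subset_disk: "Pdom \<subseteq> disk"
  by (auto simp: Pdom_def)

lemma Dhalf_lm: "Dhalf (lm l) = Dcl l"
  unfolding Dhalf_def Dcl_def using hdist_le_iff image0_disk by (auto simp: image0_def)

lemma interior_Dhalf_lm: "interior (Dhalf (lm l)) = Dopen l"
proof
  let ?be = "cnj (snd (lm l))" and ?al = "fst (lm l)"
  have "Dopen l = disk \<inter> {z. cmod (?be * z - ?al) < 1}" using Dopen_iff by auto
  moreover have "open {z. cmod (?be * z - ?al) < 1}" by (intro open_Collect_less continuous_intros)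
  ultimately have "open (Dopen l)" by (simp add: open_Int disk_def)
  thus "Dopen l \<subseteq> interior (Dhalf (lm l))"
    using Dopen_subset_Dcl Dhalf_lm by (simp add: interior_maximal)
  have be: "?be \<noteq> 0"
  proof
    assume "?be = 0"
    hence "(cmod ?al)^2 = 1" using su11_norm_sq[OF su11_lm, of l] by simp
    hence "cmod ?al = 1" using norm_ge_zero[of ?al] by (auto simp: power2_eq_1_iff)
    thus False using Re_lm[of l] abs_Re_le_cmod[of ?al] by simp
  qed
  have sub: "interior (Dhalf (lm l)) \<subseteq> interior {z. cmod (?be * z - ?al) \<le> 1}"
    using Dhalf_lm Dcl_iff by (intro interior_mono) auto
  show "interior (Dhalf (lm l)) \<subseteq> Dopen l"
  proof
    fix z assume z: "z \<in> interior (Dhalf (lm l))"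
    hence "z \<in> disk" "cmod (?be * z - ?al) \<le> 1"
      using interior_subset Dhalf_lm Dcl_iff by blast+
    moreover have "cmod (?be * z - ?al) \<noteq> 1" using not_in_interior_norm_affine_le_1[OF be] z sub by blast
    ultimately show "z \<in> Dopen l" using Dopen_iff by simp
  qed
qed

lemma fundom_eq_Pdom: "fundom a b = Pdom"
proof -
  have "{A, Ainv, B, Binv} = UNIV" using letter.exhaust by auto
  moreover have "fundom a b = (\<Inter>l\<in>{A, Ainv, B, Binv}. disk - interior (Dhalf (lm l)))"
    by (simp add: fundom_def letter_mat_def)
  ultimately show ?thesis by (auto simp: interior_Dhalf_lm Pdom_def)
qed

lemma Dcl_inv_disjoint: "Dcl l \<inter> Dcl (inv_letter l) = {}"
proof (rule ccontr)
  assume "Dcl l \<inter> Dcl (inv_letter l) \<noteq> {}"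
  then obtain z where z1: "z \<in> Dcl l" and z2: "z \<in> Dcl (inv_letter l)" by blast
  let ?al = "fst (lm l)" and ?be = "snd (lm l)"
  have n1: "cmod (cnj ?be * z - ?al) \<le> 1" using z1 Dcl_iff by blast
  have "cmod (- (cnj ?be * z + cnj ?al)) \<le> 1" using z2 Dcl_iff by (simp add: lm_inv_letter minv_def)
  hence n2: "cmod (cnj ?be * z + cnj ?al) \<le> 1" by (simp only: norm_minus_cancel)
  have "?al + cnj ?al = (cnj ?be * z + cnj ?al) - (cnj ?be * z - ?al)" by simp
  hence "cmod (?al + cnj ?al) \<le> cmod (cnj ?be * z + cnj ?al) + cmod (cnj ?be * z - ?al)"
    by (metis norm_triangle_ineq4)
  moreover have "?al + cnj ?al = of_real (2 * Re ?al)" by (simp add: complex_eq_iff)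
  ultimately have "\<bar>2 * Re ?al\<bar> \<le> 2" using n1 n2 by simp
  thus False using Re_lm[of l] by simp
qed

lemma Dcl_disjoint: "l \<noteq> l' \<Longrightarrow> Dcl l \<inter> Dcl l' = {}"
proof -
  assume ne: "l \<noteq> l'"
  have "(Dcl A \<union> Dcl Ainv) \<inter> (Dcl B \<union> Dcl Binv) = {}"
    using schottky Dhalf_lm[of A] Dhalf_lm[of Ainv] Dhalf_lm[of B] Dhalf_lm[of Binv]
    by (simp add: schottky_def letter_mat_def)
  hence "Dcl A \<inter> Dcl B = {}" "Dcl A \<inter> Dcl Binv = {}" "Dcl Ainv \<inter> Dcl B = {}"
    "Dcl Ainv \<inter> Dcl Binv = {}" by blast+
  thus ?thesis using ne Dcl_inv_disjoint[of l]
    by (cases l; cases l'; simp add: Int_commute)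
qed

lemma moeb_lm_mem_Dcl_iff: "z \<in> disk \<Longrightarrow> moeb (lm l) z \<in> Dcl l \<longleftrightarrow> z \<notin> Dopen (inv_letter l)"
  and moeb_lm_mem_Dopen_iff: "z \<in> disk \<Longrightarrow> moeb (lm l) z \<in> Dopen l \<longleftrightarrow> z \<notin> Dcl (inv_letter l)"
proof -
  assume z: "z \<in> disk"
  have "hcosh (moeb (lm l) z) (image0 l) = hcosh z 0"
    using hcosh_moeb[OF su11_lm z zero_in_disk] by (simp add: image0_def)
  moreover have "hcosh (moeb (lm l) z) 0 = hcosh z (image0 (inv_letter l))"
  proof -
    have "moeb (lm l) (image0 (inv_letter l)) = 0"
      using moeb_moeb_minv[OF su11_lm, of 0] by (simp add: image0_def lm_inv_letter)
    thus ?thesis using hcosh_moeb[OF su11_lm[of l] z image0_disk[of "inv_letter l"]] by simp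
  qed
  ultimately show "moeb (lm l) z \<in> Dcl l \<longleftrightarrow> z \<notin> Dopen (inv_letter l)"
    and "moeb (lm l) z \<in> Dopen l \<longleftrightarrow> z \<notin> Dcl (inv_letter l)"
    using z moeb_disk[OF su11_lm z] by (auto simp: Dcl_def Dopen_def)
qed

lemma zero_notin_Dcl: "0 \<notin> Dcl l"
  using Dcl_iff Re_lm[of l] abs_Re_le_cmod[of "fst (lm l)"] by force

lemma zero_in_Pdom: "0 \<in> Pdom"
  using zero_notin_Dcl Dopen_subset_Dcl by (auto simp: Pdom_def)

lemma moeb_wm_disk: "z \<in> disk \<Longrightarrow> moeb (wm r) z \<in> disk"
  by (simp add: moeb_disk su11_wm)

lemma moeb_wm_Cons: "z \<in> disk \<Longrightarrow> moeb (wm (l # r)) z = moeb (lm l) (moeb (wm r) z)"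
  by (simp add: wm_Cons moeb_mmul su11_lm su11_wm mem_disk_iff)

lemma ping_pong:
  assumes "reduced (l # r)" "z \<in> Pdom"
  shows "moeb (wm (l # r)) z \<in> Dcl l \<and> (r \<noteq> [] \<longrightarrow> moeb (wm (l # r)) z \<in> Dopen l)"
  using assms
proof (induction r arbitrary: l)
  case Nil
  thus ?case using moeb_lm_mem_Dcl_iff Pdom_subset_disk by (auto simp: wm_single Pdom_def)
next
  case (Cons l' r)
  have zd: "z \<in> disk" using Cons.prems Pdom_subset_disk by blast
  have "moeb (wm (l' # r)) z \<in> Dcl l'" using Cons by simp
  moreover have "l' \<noteq> inv_letter l" using Cons.prems by simp
  ultimately have "moeb (wm (l' # r)) z \<notin> Dcl (inv_letter l)" using Dcl_disjoint by blast
  hence "moeb (lm l) (moeb (wm (l' # r)) z) \<in> Dopen l"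
    using moeb_lm_mem_Dopen_iff moeb_wm_disk[OF zd] by blast
  hence "moeb (wm (l # l' # r)) z \<in> Dopen l" using moeb_wm_Cons[OF zd] by simp
  thus ?case using Dopen_subset_Dcl by auto
qed

lemma reduced_word_ne_mid: "reduced w \<Longrightarrow> w \<noteq> [] \<Longrightarrow> wm w \<noteq> mid"
  using ping_pong[OF _ zero_in_Pdom] zero_notin_Dcl by (cases w) force+

lemma lm_square_ne_mid: "mmul (lm l) (lm l) \<noteq> mid"
proof -
  have "l \<noteq> inv_letter l" using inv_letter_neq[of l] by metis
  thus ?thesis using reduced_word_ne_mid[of "[l, l]"] by (simp add: wm_Cons)
qed

lemma lm_ne_mid: "lm l \<noteq> mid"
  using reduced_word_ne_mid[of "[l]"] by (simp add: wm_single)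

lemma stabilizer_of_adjacent_pair:
  assumes "su11 x" "mmul k x = x \<or> mmul k x = mmul x (lm f)"
    and "mmul k (mmul x (lm f)) = x \<or> mmul k (mmul x (lm f)) = mmul x (lm f)"
  shows "k = mid"
proof (cases "mmul k x = x")
  case True
  thus ?thesis using mmul_cancel_right[OF assms(1), of k mid] by simp
next
  case False
  hence hxf: "mmul k (mmul x (lm f)) = mmul x (mmul (lm f) (lm f))" using assms(2) by (metis mmul_assoc)
  show ?thesis
  proof (cases "mmul k (mmul x (lm f)) = x")
    case True
    hence "mmul x (mmul (lm f) (lm f)) = mmul x mid" using hxf by simp
    thus ?thesis using mmul_cancel_left[OF assms(1)] lm_square_ne_mid by blast
  next
    case False
    hence "mmul x (mmul (lm f) (lm f)) = mmul x (lm f)" using hxf assms(3) by simp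
    hence "mmul (lm f) (lm f) = mmul mid (lm f)" using mmul_cancel_left[OF assms(1)] by simp
    thus ?thesis using mmul_cancel_right[OF su11_lm[of f]] lm_ne_mid by blast
  qed
qed

lemma tile_eq: "tile a b x = moeb x ` Pdom"
  by (simp add: tile_def fundom_eq_Pdom)

lemma tile_mmul:
  assumes "su11 x" "su11 y"
  shows "tile a b (mmul x y) = moeb x ` tile a b y"
proof -
  have "moeb (mmul x y) ` Pdom = (moeb x \<circ> moeb y) ` Pdom"
    using Pdom_subset_disk moeb_mmul[OF assms] by (intro image_cong) (auto simp: mem_disk_iff)
  thus ?thesis by (simp add: tile_eq image_comp)
qed

lemma bisector_subset_Pdom: "bisector l \<subseteq> Pdom"
proof
  fix z assume "z \<in> bisector l"
  hence "z \<in> Dcl l" "z \<notin> Dopen l" "z \<in> disk" by (auto simp: bisector_def Dcl_def)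
  moreover have "z \<notin> Dopen l'" for l'
    using calculation Dcl_disjoint[of l l'] Dopen_subset_Dcl by (cases "l' = l") auto
  ultimately show "z \<in> Pdom" by (simp add: Pdom_def)
qed

lemma Pdom_inter_lm_tile: "Pdom \<inter> moeb (lm l) ` Pdom \<subseteq> bisector l"
  using ping_pong[of l "[]"] by (auto simp: bisector_def Pdom_def wm_single)

lemma bisector_subset_lm_tile: "bisector l \<subseteq> moeb (lm l) ` Pdom"
proof
  fix y assume y: "y \<in> bisector l"
  hence yd: "y \<in> disk" using bisector_subset_disk by blast
  define z where "z = moeb (minv (lm l)) y"
  have zd: "z \<in> disk" using moeb_disk[OF su11_minv[OF su11_lm] yd] by (simp add: z_def)
  have yz: "y = moeb (lm l) z"
    using moeb_moeb_minv[OF su11_lm, of y] yd by (simp add: z_def mem_disk_iff)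
  have "z \<in> Dcl (inv_letter l)" "z \<notin> Dopen (inv_letter l)"
    using moeb_lm_mem_Dcl_iff[OF zd] moeb_lm_mem_Dopen_iff[OF zd] y yz by (auto simp: bisector_def)
  hence "z \<notin> Dopen l'" for l'
    using Dcl_disjoint[of "inv_letter l" l'] Dopen_subset_Dcl by (cases "l' = inv_letter l") auto
  hence "z \<in> Pdom" using zd by (simp add: Pdom_def)
  thus "y \<in> moeb (lm l) ` Pdom" using yz by blast
qed

lemma Pdom_inter_long_word_tile:
  assumes "reduced w" "2 \<le> length w"
  shows "Pdom \<inter> moeb (wm w) ` Pdom = {}"
proof -
  obtain l l' r where "w = l # l' # r" using assms(2) by (cases w; cases "tl w") auto
  thus ?thesis using ping_pong[of l "l' # r"] assms(1) by (auto simp: Pdom_def)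
qed

lemma tile_inter_cases:
  assumes x: "x \<in> Gamma a b" and y: "y \<in> Gamma a b"
  shows "y = x \<or> tile a b x \<inter> tile a b y = {} \<or>
         (\<exists>l. y = mmul x (lm l) \<and> tile a b x \<inter> tile a b y \<subseteq> moeb x ` bisector l)"
proof -
  obtain wx wy where wx: "x = wm wx" and wy: "y = wm wy" using Gamma_E x y by blast
  define r where "r = reduce (word_inv wx @ wy)"
  have sx: "su11 x" using su11_wm wx by simp
  have yx: "y = mmul x (wm r)"
    using sx by (simp add: r_def wm_reduce wm_append wm_word_inv wx wy mmul_assoc[symmetric] mmul_minv)
  have "inj_on (moeb x) disk" using moeb_inj_disk[OF sx] by (meson inj_onI)
  moreover have "moeb (wm r) ` Pdom \<subseteq> disk" using moeb_wm_disk Pdom_subset_disk by blast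
  ultimately have inter: "tile a b x \<inter> tile a b y = moeb x ` (Pdom \<inter> moeb (wm r) ` Pdom)"
    using yx Pdom_subset_disk tile_mmul[OF sx su11_wm] by (simp add: tile_eq inj_on_image_Int)
  consider "r = []" | l where "r = [l]" | "2 \<le> length r" by (cases r; cases "tl r") auto
  thus ?thesis
  proof cases
    case 2
    have "tile a b x \<inter> tile a b y \<subseteq> moeb x ` bisector l"
      using inter Pdom_inter_lm_tile[of l] 2 by (auto simp: wm_single)
    thus ?thesis using yx 2 by (auto simp: wm_single)
  qed (use yx inter Pdom_inter_long_word_tile r_def reduced_reduce in auto)
qed

end

section \<open>Geodesics crossing the tessellation\<close>

lemma int_step_cover:
  fixes s :: "int \<Rightarrow> real"
  assumes "s i \<le> t" "t < s j" "i \<le> j"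
  obtains k where "s k \<le> t" "t < s (k + 1)"
proof -
  have "\<exists>k. s k \<le> t \<and> t < s (k + 1)" if "s i \<le> t" "t < s (i + int d)" for i d
    using that
  proof (induction d arbitrary: i)
    case (Suc d)
    show ?case
    proof (cases "t < s (i + 1)")
      case False
      moreover have "t < s ((i + 1) + int d)" using Suc.prems(2) by (simp add: add.assoc)
      ultimately show ?thesis using Suc.IH[of "i + 1"] by (simp add: not_less)
    qed (use Suc.prems in blast)
  qed simp
  thus ?thesis using assms that[of _] by (metis le_add_diff_inverse nat_0_le diff_ge_0_iff_ge int_nat_eq)
qed

locale coded_lift = schottky_pair +
  fixes h :: mat and c :: "real \<Rightarrow> complex" and p q :: complex
    and s :: "int \<Rightarrow> real" and G :: "int \<Rightarrow> mat" and e :: "int \<Rightarrow> letter"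
  assumes h_in_Gamma: "h \<in> Gamma a b" and h_ne_mid: "h \<noteq> mid"
    and geo: "geodesic_param c p q" and attractor_q: "attractor h q" and attractor_p: "attractor (minv h) p"
    and s_strict_mono: "strict_mono s" and s_at_top: "filterlim s at_top at_top"
    and s_at_bot: "filterlim s at_bot at_bot"
    and G_0: "G 0 = mid" and G_Suc: "\<And>k. G (k + 1) = mmul (G k) (lm (e k))"
    and c_tiles: "\<And>k. c ` {s k .. s (k + 1)} \<subseteq> tile a b (G k)"
begin

lemma G_pred: "G (k - 1) = mmul (G k) (minv (lm (e (k - 1))))"
  using G_Suc[of "k - 1"] by (simp add: mmul_assoc mmul_minv su11_lm)

lemma G_in_Gamma: "G k \<in> Gamma a b"
proof (induction k rule: int_induct[where k=0])
  case base thus ?case using G_0 Gamma_wm[of "[]"] by simp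
next
  case (step1 i) thus ?case using G_Suc Gamma_mmul Gamma_lm by simp
next
  case (step2 i) thus ?case using G_pred Gamma_mmul Gamma_minv Gamma_lm by simp
qed

lemma su11_G: "su11 (G k)"
  using G_in_Gamma Gamma_su11 by blast

lemma su11_h: "su11 h"
  using Gamma_su11[OF h_in_Gamma] .

lemma c_in_disk: "c t \<in> disk"
  using geo by (simp add: geodesic_param_def)

lemma s_mono: "i \<le> j \<Longrightarrow> s i \<le> s j"
  using s_strict_mono by (simp add: strict_mono_less_eq)

lemma s_less: "i < j \<Longrightarrow> s i < s j"
  using s_strict_mono by (simp add: strict_mono_less)

lemma exists_time_interval: obtains k where "s k \<le> t" "t < s (k + 1)"
proof -
  obtain i where i: "s i \<le> t"
    using s_at_bot by (metis filterlim_at_bot eventually_at_bot_linorder order_refl)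
  obtain j0 where "\<And>k. k \<ge> j0 \<Longrightarrow> t < s k"
    using s_at_top by (auto simp: filterlim_at_top_dense eventually_at_top_linorder)
  hence "t < s (max i j0)" by simp
  thus ?thesis using int_step_cover[where s = s, OF i _ max.cobounded1] that by blast
qed

lemma c_in_tile: "s k \<le> t \<Longrightarrow> t \<le> s (k + 1) \<Longrightarrow> c t \<in> tile a b (G k)"
  using c_tiles[of k] by auto

lemma moeb_tile: "x \<in> Gamma a b \<Longrightarrow> y \<in> Gamma a b \<Longrightarrow> moeb x ` tile a b y = tile a b (mmul x y)"
  using tile_mmul Gamma_su11 by simp

definition pullback :: "mat \<Rightarrow> real \<Rightarrow> complex" where
  "pullback y t = moeb (minv y) (c t)"

lemma c_in_moeb_image_iff:
  assumes y: "y \<in> Gamma a b" and S: "S \<subseteq> disk"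
  shows "c t \<in> moeb y ` S \<longleftrightarrow> pullback y t \<in> S"
proof
  assume "c t \<in> moeb y ` S"
  then obtain z where z: "z \<in> S" "c t = moeb y z" by blast
  hence "pullback y t = z" using moeb_minv_moeb[OF Gamma_su11[OF y]] S
    by (auto simp: pullback_def mem_disk_iff)
  thus "pullback y t \<in> S" using z by simp
next
  assume "pullback y t \<in> S"
  moreover have "c t = moeb y (pullback y t)"
    using moeb_moeb_minv[OF Gamma_su11[OF y]] c_in_disk by (simp add: pullback_def mem_disk_iff less_imp_le)
  ultimately show "c t \<in> moeb y ` S" by blast
qed

definition side_fn :: "mat \<Rightarrow> letter \<Rightarrow> real \<Rightarrow> real" where
  "side_fn y l t = hcosh (pullback y t) (image0 l) - hcosh (pullback y t) 0"

lemma side_fn_exp_comb: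
  assumes "y \<in> Gamma a b"
  obtains \<alpha> \<beta> where "\<And>t. side_fn y l t = \<alpha> * exp t + \<beta> * exp (-t)"
  using hcosh_diff_along_geodesic[OF geodesic_param_moeb[OF geo su11_minv[OF Gamma_su11[OF assms]]]
      image0_disk zero_in_disk]
  by (auto simp: side_fn_def pullback_def)

lemma c_in_tile_side_fn: "y \<in> Gamma a b \<Longrightarrow> c t \<in> tile a b y \<longleftrightarrow> (\<forall>l. 0 \<le> side_fn y l t)"
  using c_in_moeb_image_iff[OF _ Pdom_subset_disk] moeb_disk[OF su11_minv[OF Gamma_su11] c_in_disk]
  by (auto simp: tile_eq Pdom_def Dopen_def side_fn_def pullback_def not_less)

lemma c_in_bisector_side_fn: "y \<in> Gamma a b \<Longrightarrow> c t \<in> moeb y ` bisector l \<longleftrightarrow> side_fn y l t = 0"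
  using c_in_moeb_image_iff[OF _ bisector_subset_disk] moeb_disk[OF su11_minv[OF Gamma_su11] c_in_disk]
  by (auto simp: bisector_def Dopen_def Dcl_def side_fn_def pullback_def)

lemma c_in_tile_between:
  assumes y: "y \<in> Gamma a b" and "t1 \<le> t" "t \<le> t2" "c t1 \<in> tile a b y" "c t2 \<in> tile a b y"
  shows "c t \<in> tile a b y"
proof -
  have "0 \<le> side_fn y l t" for l
  proof -
    obtain \<alpha> \<beta> where "\<And>t. side_fn y l t = \<alpha> * exp t + \<beta> * exp (-t)"
      using side_fn_exp_comb[OF y, where l = l] by blast
    thus ?thesis using exp_comb_nonneg_between[OF assms(2,3)] assms(4,5) c_in_tile_side_fn[OF y] by metis
  qed
  thus ?thesis using c_in_tile_side_fn[OF y] by simp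
qed

lemma bisector_of_two_times:
  assumes y: "y \<in> Gamma a b" and "t1 \<noteq> t2"
    and "c t1 \<in> moeb y ` bisector l" "c t2 \<in> moeb y ` bisector l"
  shows "c t \<in> moeb y ` bisector l"
proof -
  obtain \<alpha> \<beta> where f: "\<And>t. side_fn y l t = \<alpha> * exp t + \<beta> * exp (-t)"
    using side_fn_exp_comb[OF y, where l = l] by blast
  hence "\<alpha> = 0 \<and> \<beta> = 0" using exp_comb_two_zeros[OF assms(2)] assms(3,4) c_in_bisector_side_fn[OF y] by metis
  thus ?thesis using f c_in_bisector_side_fn[OF y] by simp
qed

lemma bisector_of_interior_time:
  assumes y: "y \<in> Gamma a b" and "t1 < t" "t < t2" "c t1 \<in> tile a b y" "c t2 \<in> tile a b y"
    and "c t \<in> moeb y ` bisector l"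
  shows "c t' \<in> moeb y ` bisector l"
proof -
  obtain \<alpha> \<beta> where f: "\<And>t. side_fn y l t = \<alpha> * exp t + \<beta> * exp (-t)"
    using side_fn_exp_comb[OF y, where l = l] by blast
  hence "\<alpha> = 0 \<and> \<beta> = 0"
    using exp_comb_zero_between[OF assms(2,3)] assms(4-6) c_in_tile_side_fn[OF y] c_in_bisector_side_fn[OF y]
    by metis
  thus ?thesis using f c_in_bisector_side_fn[OF y] by simp
qed

lemma moeb_h_fixes_ends: "moeb h q = q" "moeb h p = p"
  using attractor_q attractor_p moeb_moeb_minv[OF su11_h, of p] by (auto simp: attractor_def)

lemma moeb_h_shift: obtains \<tau> where "\<And>t. moeb h (c t) = c (t + \<tau>)"
  using geodesic_param_same_ends_shift[OF geo] geodesic_param_moeb[OF geo su11_h] moeb_h_fixes_ends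
  by metis

lemma bisector_letter_unique:
  assumes x: "x \<in> Gamma a b" and "z \<in> moeb x ` bisector l" "z \<in> moeb x ` bisector l'"
  shows "l = l'"
  using assms moeb_inj_disk[OF Gamma_su11[OF x]] bisector_subset_disk Dcl_disjoint bisector_subset_Dcl
  by (smt (verit) disjoint_iff image_iff subsetD)

lemma tiles_containing_c:
  assumes x: "x \<in> Gamma a b" and y: "y \<in> Gamma a b" and L: "\<And>t. c t \<in> moeb x ` bisector f"
    and Y: "\<And>t. c t \<in> tile a b y"
  shows "y = x \<or> y = mmul x (lm f)"
proof -
  have "c 0 \<in> tile a b x" using L[of 0] bisector_subset_Pdom tile_eq by blast
  thus ?thesis using tile_inter_cases[OF x y] Y[of 0] bisector_letter_unique[OF x _ L[of 0]] by blast
qed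

(* Since h translates c along itself, a lift contained in a bisector would be stabilised by h
   inside the two tiles adjacent along it. *)
lemma c_not_in_bisector:
  assumes x: "x \<in> Gamma a b"
  shows "\<not> (\<forall>t. c t \<in> moeb x ` bisector f)"
proof
  assume L: "\<forall>t. c t \<in> moeb x ` bisector f"
  obtain \<tau> where \<tau>: "\<And>t. moeb h (c t) = c (t + \<tau>)" using moeb_h_shift by blast
  have xf: "mmul x (lm f) \<in> Gamma a b" using Gamma_mmul[OF x Gamma_lm] .
  have T1: "c t \<in> tile a b x" for t using L bisector_subset_Pdom tile_eq by blast
  have T2: "c t \<in> tile a b (mmul x (lm f))" for t
    using L bisector_subset_lm_tile moeb_tile[OF x Gamma_lm] tile_eq by blast
  have hT: "c t \<in> tile a b (mmul h y)" if "y \<in> Gamma a b" "\<And>t. c t \<in> tile a b y" for y t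
    using \<tau>[of "t - \<tau>"] that moeb_tile[OF h_in_Gamma that(1)] by (metis diff_add_cancel imageI)
  have "h = mid"
  proof (rule stabilizer_of_adjacent_pair[OF Gamma_su11[OF x]])
    show "mmul h x = x \<or> mmul h x = mmul x (lm f)"
      using tiles_containing_c[OF x Gamma_mmul[OF h_in_Gamma x]] L hT[OF x T1] by blast
    show "mmul h (mmul x (lm f)) = x \<or> mmul h (mmul x (lm f)) = mmul x (lm f)"
      using tiles_containing_c[OF x Gamma_mmul[OF h_in_Gamma xf]] L hT[OF xf T2] by blast
  qed
  thus False using h_ne_mid by simp
qed

lemma adjacent_tiles_bisector:
  assumes "c t \<in> tile a b (G k)" "c t \<in> tile a b (G (k + 1))"
  shows "c t \<in> moeb (G k) ` bisector (e k)"
proof -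
  have "tile a b (G (k + 1)) = moeb (G k) ` (moeb (lm (e k)) ` Pdom)"
    using G_Suc[of k] moeb_tile[OF G_in_Gamma Gamma_lm] tile_eq by simp
  moreover have "moeb (lm (e k)) ` Pdom \<subseteq> disk" using moeb_disk[OF su11_lm] Pdom_subset_disk by blast
  ultimately have "pullback (G k) t \<in> moeb (lm (e k)) ` Pdom"
    using assms(2) c_in_moeb_image_iff[OF G_in_Gamma] by simp
  moreover have "pullback (G k) t \<in> Pdom"
    using assms(1) c_in_moeb_image_iff[OF G_in_Gamma Pdom_subset_disk] by (simp add: tile_eq)
  ultimately show ?thesis
    using Pdom_inter_lm_tile c_in_moeb_image_iff[OF G_in_Gamma bisector_subset_disk] by blast
qed

lemma tile_eq_G_at_interior_time:
  assumes y: "y \<in> Gamma a b" and ct: "c t \<in> tile a b y" and t: "s k < t" "t < s (k + 1)"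
  shows "y = G k"
proof -
  have ctk: "c t \<in> tile a b (G k)" using t c_in_tile by simp
  consider "y = G k" | "tile a b (G k) \<inter> tile a b y = {}"
    | l where "tile a b (G k) \<inter> tile a b y \<subseteq> moeb (G k) ` bisector l"
    using tile_inter_cases[OF G_in_Gamma y] by blast
  thus ?thesis
  proof cases
    case 3
    hence "c t \<in> moeb (G k) ` bisector l" using ct ctk by blast
    hence "\<forall>t'. c t' \<in> moeb (G k) ` bisector l"
      using bisector_of_interior_time[OF G_in_Gamma t c_in_tile[of k "s k"] c_in_tile[of k "s (k + 1)"]]
        s_mono by simp
    thus ?thesis using c_not_in_bisector[OF G_in_Gamma] by blast
  qed (use ct ctk in blast)+
qed

lemma tile_eq_G_at_switch_time:
  assumes y: "y \<in> Gamma a b" and ct: "c (s k) \<in> tile a b y"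
  shows "y = G (k - 1) \<or> y = G k"
proof -
  have G': "G (k - 1) \<in> Gamma a b" by (rule G_in_Gamma)
  have c1: "c (s k) \<in> tile a b (G (k - 1))" and c2: "c (s k) \<in> tile a b (G k)"
    using c_in_tile[of "k - 1"] c_in_tile[of k] s_mono by simp_all
  hence "c (s k) \<in> moeb (G (k - 1)) ` bisector (e (k - 1))"
    using adjacent_tiles_bisector[of "s k" "k - 1"] by simp
  thus ?thesis
    using tile_inter_cases[OF G' y] ct c1 bisector_letter_unique[OF G'] G_Suc[of "k - 1"] by fastforce
qed

lemma tile_containing_c:
  assumes y: "y \<in> Gamma a b" and ct: "c t \<in> tile a b y"
  obtains j where "y = G j" "s j \<le> t" "t \<le> s (j + 1)"
proof -
  obtain k where k: "s k \<le> t" "t < s (k + 1)" using exists_time_interval by blast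
  show ?thesis
  proof (cases "s k < t")
    case True
    thus ?thesis using tile_eq_G_at_interior_time[OF y ct True k(2)] k that by simp
  next
    case False
    hence "t = s k" using k by simp
    thus ?thesis using tile_eq_G_at_switch_time[OF y] ct that k s_mono[of "k - 1" k] by fastforce
  qed
qed

(* Backtracking e (k + 1) = e k ^-1 would put c on the bisector of G k P at two times. *)
lemma coding_reduced: "e (k + 1) \<noteq> inv_letter (e k)"
proof
  assume E: "e (k + 1) = inv_letter (e k)"
  have "G (k + 2) = mmul (mmul (G k) (lm (e k))) (lm (e (k + 1)))"
    using G_Suc[of "k + 1"] G_Suc[of k] by (simp add: add.assoc)
  hence G2: "G (k + 2) = G k" using E by (simp add: lm_inv_letter mmul_assoc mmul_minv su11_lm)
  have a1: "c (s k) \<in> tile a b (G k)" using c_in_tile[of k "s k"] s_mono[of k "k + 1"] by simp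
  have a2: "c (s (k + 3)) \<in> tile a b (G k)"
    using c_in_tile[of "k + 2" "s (k + 3)"] s_mono[of "k + 2" "k + 3"] G2 by (simp add: add.assoc)
  have "c t \<in> moeb (G k) ` bisector (e k)" if "s (k + 1) \<le> t" "t \<le> s (k + 2)" for t
  proof (rule adjacent_tiles_bisector)
    show "c t \<in> tile a b (G k)"
      using c_in_tile_between[OF G_in_Gamma _ _ a1 a2] that s_mono[of k "k + 1"] s_mono[of "k + 2" "k + 3"]
      by simp
    show "c t \<in> tile a b (G (k + 1))" using c_in_tile[of "k + 1" t] that by (simp add: add.assoc)
  qed
  hence "c (s (k + 1)) \<in> moeb (G k) ` bisector (e k)" "c (s (k + 2)) \<in> moeb (G k) ` bisector (e k)"
    using s_mono[of "k + 1" "k + 2"] by simp_all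
  moreover have "s (k + 1) \<noteq> s (k + 2)" using s_less[of "k + 1" "k + 2"] by simp
  ultimately have "\<forall>t. c t \<in> moeb (G k) ` bisector (e k)"
    using bisector_of_two_times[OF G_in_Gamma] by blast
  thus False using c_not_in_bisector[OF G_in_Gamma] by blast
qed

definition code_word :: "int \<Rightarrow> nat \<Rightarrow> letter list" where
  "code_word i d = map (\<lambda>m. e (i + int m)) [0..<d]"

lemma G_add_code_word: "G (i + int d) = mmul (G i) (wm (code_word i d))"
proof (induction d)
  case (Suc d)
  have "G (i + int (Suc d)) = mmul (G (i + int d)) (lm (e (i + int d)))"
    using G_Suc[of "i + int d"] by (simp add: algebra_simps)
  thus ?case using Suc by (simp add: code_word_def wm_append wm_single mmul_assoc)
qed (simp add: code_word_def)

lemma reduced_code_word: "reduced (code_word i d)"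
  unfolding code_word_def
  by (rule reduced_map_upt) (use coding_reduced[of "i + int _"] in \<open>simp add: algebra_simps\<close>)

lemma G_inj: "G i = G j \<Longrightarrow> i = j"
proof (rule ccontr)
  assume E: "G i = G j" and "i \<noteq> j"
  { fix i j assume "i < j" "G i = G j"
    define d where "d = nat (j - i)"
    have "mmul (G i) (wm (code_word i d)) = mmul (G i) mid"
      using G_add_code_word[of i d] \<open>i < j\<close> \<open>G i = G j\<close> by (simp add: d_def)
    hence "wm (code_word i d) = mid" using mmul_cancel_left[OF su11_G] by blast
    moreover have "code_word i d \<noteq> []" using \<open>i < j\<close> by (simp add: code_word_def d_def)
    ultimately have False using reduced_word_ne_mid[OF reduced_code_word] by blast }
  thus False using E \<open>i \<noteq> j\<close> by (metis linorder_neqE)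
qed

lemma c_in_tile_G_iff: "c t \<in> tile a b (G j) \<longleftrightarrow> s j \<le> t \<and> t \<le> s (j + 1)"
  using tile_containing_c[OF G_in_Gamma] G_inj c_in_tile by metis

(* h carries the tile crossed during [s k, s (k + 1)] to the tile crossed during the shifted
   interval, so it shifts the whole sequence of tiles. *)
lemma mmul_h_G:
  assumes \<tau>: "\<And>t. moeb h (c t) = c (t + \<tau>)"
  obtains j where "mmul h (G k) = G j" "s j = s k + \<tau>" "s (j + 1) = s (k + 1) + \<tau>"
proof -
  have hG: "mmul h (G k) \<in> Gamma a b" using Gamma_mmul[OF h_in_Gamma G_in_Gamma] .
  have iff: "c (t + \<tau>) \<in> tile a b (mmul h (G k)) \<longleftrightarrow> c t \<in> tile a b (G k)" for t
    using moeb_tile[OF h_in_Gamma G_in_Gamma] \<tau>[of t] moeb_inj_disk[OF su11_h] c_in_disk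
      tile_eq moeb_disk[OF su11_G] Pdom_subset_disk by (smt (verit) image_iff subsetD)
  have "c (s k + \<tau>) \<in> tile a b (mmul h (G k))" using iff[of "s k"] c_in_tile[of k "s k"] s_mono by simp
  then obtain j where j: "mmul h (G k) = G j" using tile_containing_c[OF hG] by blast
  have I: "(s j \<le> t \<and> t \<le> s (j + 1)) \<longleftrightarrow> (s k \<le> t - \<tau> \<and> t - \<tau> \<le> s (k + 1))" for t
    using iff[of "t - \<tau>"] by (simp add: j c_in_tile_G_iff)
  have "s k + \<tau> \<le> s j" "s (j + 1) \<le> s (k + 1) + \<tau>"
    using I[of "s j"] I[of "s (j + 1)"] s_mono[of j "j + 1"] by auto
  moreover have "s j \<le> s k + \<tau>" "s (k + 1) + \<tau> \<le> s (j + 1)"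
    using I[of "s k + \<tau>"] I[of "s (k + 1) + \<tau>"] s_mono[of k "k + 1"] by auto
  ultimately have "s j = s k + \<tau>" "s (j + 1) = s (k + 1) + \<tau>" by linarith+
  thus ?thesis using that j by blast
qed

lemma mmul_h_G_shift: obtains m where "\<And>k. mmul h (G k) = G (k + m)"
proof -
  obtain \<tau> where \<tau>: "\<And>t. moeb h (c t) = c (t + \<tau>)" using moeb_h_shift by blast
  define \<sigma> where "\<sigma> k = (SOME j. mmul h (G k) = G j \<and> s j = s k + \<tau> \<and> s (j + 1) = s (k + 1) + \<tau>)" for k
  have \<sigma>: "mmul h (G k) = G (\<sigma> k) \<and> s (\<sigma> k) = s k + \<tau> \<and> s (\<sigma> k + 1) = s (k + 1) + \<tau>" for k
    unfolding \<sigma>_def by (rule someI_ex) (metis mmul_h_G[OF \<tau>])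
  have step: "\<sigma> (k + 1) = \<sigma> k + 1" for k
    using \<sigma>[of k] \<sigma>[of "k + 1"] strict_mono_eq[OF s_strict_mono] by metis
  have "\<sigma> k = \<sigma> 0 + k" for k
  proof (induction k rule: int_induct[where k=0])
    case (step1 i) thus ?case using step[of i] by simp
  next
    case (step2 i) thus ?case using step[of "i - 1"] by simp
  qed simp
  thus ?thesis using \<sigma> that by (metis add.commute)
qed

end

section \<open>Periodic codings\<close>

locale periodic_coded_lift = coded_lift +
  fixes n :: nat
  assumes n_pos: "0 < n" and e_periodic: "\<And>k. e (k + int n) = e k"
begin

definition W :: mat where "W = G (int n)"

lemma W_in_Gamma: "W \<in> Gamma a b"
  by (simp add: W_def G_in_Gamma)

lemma su11_W: "su11 W"
  using Gamma_su11[OF W_in_Gamma] .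

lemma G_add_period: "G (k + int n) = mmul W (G k)"
proof (induction k rule: int_induct[where k=0])
  case base thus ?case by (simp add: W_def G_0)
next
  case (step1 i)
  thus ?case using G_Suc[of "i + int n"] G_Suc[of i] e_periodic[of i] by (simp add: algebra_simps mmul_assoc)
next
  case (step2 i)
  thus ?case using G_pred[of "i + int n"] G_pred[of i] e_periodic[of "i - 1"] by (simp add: algebra_simps mmul_assoc)
qed

lemma h_W_commute: "mmul h W = mmul W h"
proof -
  obtain m where m: "\<And>k. mmul h (G k) = G (k + m)" using mmul_h_G_shift by blast
  have "mmul h W = G (int n + m)" using m[of "int n"] by (simp add: W_def)
  also have "\<dots> = mmul W h" using G_add_period[of m] m[of 0] G_0 by (simp add: add.commute)
  finally show ?thesis .
qed

lemma minv_h_W_commute: "mmul (minv h) W = mmul W (minv h)"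
  using h_W_commute su11_h
  by (metis mmul_assoc mmul_mid mid_mmul mmul_minv minv_mmul_self)

lemma moeb_W_fixes_ends: "moeb W q = q" "moeb W p = p"
  using commuting_fixes_attractor[OF su11_h su11_W h_W_commute attractor_q]
    commuting_fixes_attractor[OF su11_minv[OF su11_h] su11_W minv_h_W_commute attractor_p] by simp_all

(* W carries the tile G 0 P crossed during [s 0, s 1] to G n P, crossed after s n >= s 1: so W
   translates the lift forward. *)
lemma moeb_W_shift: obtains \<tau> where "0 < \<tau>" "\<And>t. moeb W (c t) = c (t + \<tau>)"
proof -
  have "geodesic_param (\<lambda>t. moeb W (c t)) p q" using geodesic_param_moeb[OF geo su11_W] moeb_W_fixes_ends by simp
  then obtain \<tau> where \<tau>: "\<And>t. moeb W (c t) = c (t + \<tau>)" using geodesic_param_same_ends_shift[OF geo] by blast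
  define t0 where "t0 = (s 0 + s 1) / 2"
  have t0: "s 0 < t0" "t0 < s 1" using s_less[of 0 1] by (simp_all add: t0_def)
  hence "moeb W (c t0) \<in> tile a b (mmul W (G 0))"
    using c_in_tile[of 0 t0] moeb_tile[OF W_in_Gamma G_in_Gamma] by force
  moreover have "mmul W (G 0) = G (int n)" using G_add_period[of 0] by simp
  ultimately have "c (t0 + \<tau>) \<in> tile a b (G (int n))" using \<tau> by simp
  hence "s (int n) \<le> t0 + \<tau>" using c_in_tile_G_iff by simp
  moreover have "s 1 \<le> s (int n)" using s_mono n_pos by simp
  ultimately have "0 < \<tau>" using t0 by simp
  thus ?thesis using that \<tau> by blast
qed

lemma W_attractors: "attractor W q" "attractor (minv W) p"
proof -
  obtain \<tau> where \<tau>: "0 < \<tau>" "\<And>t. moeb W (c t) = c (t + \<tau>)" using moeb_W_shift by blast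
  show "attractor W q" using attractor_from_shift[OF su11_W geo moeb_W_fixes_ends(1) \<tau>] .
  have "moeb (minv W) (c (- t)) = c (- (t + \<tau>))" for t
  proof -
    have "moeb (minv W) (moeb W (c (- t - \<tau>))) = c (- t - \<tau>)"
      using moeb_minv_moeb[OF su11_W] c_in_disk by (simp add: mem_disk_iff less_imp_le)
    thus ?thesis using \<tau>(2)[of "- t - \<tau>"] by simp
  qed
  moreover have "moeb (minv W) p = p"
    using moeb_W_fixes_ends(2) moeb_minv_moeb[OF su11_W, of p] geodesic_param_ends_on_circle[OF geo] by simp
  ultimately show "attractor (minv W) p"
    using attractor_from_shift[OF su11_minv[OF su11_W] geodesic_param_reverse[OF geo] _ \<tau>(1)] by blast
qed

lemma wm_rotate_code_word:
  assumes i: "i < n"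
  shows "wm (rotate i (code_word 0 n)) = mmul (mmul (minv (G (int i))) W) (G (int i))"
proof -
  have tk: "take i (code_word 0 n) = code_word 0 i" using i by (simp add: code_word_def take_map)
  have Gi: "G (int i) = wm (code_word 0 i)" using G_add_code_word[of 0 i] G_0 by simp
  have "W = wm (code_word 0 n)" using G_add_code_word[of 0 n] G_0 by (simp add: W_def)
  also have "\<dots> = mmul (wm (take i (code_word 0 n))) (wm (drop i (code_word 0 n)))"
    by (simp flip: wm_append)
  finally have "W = mmul (G (int i)) (wm (drop i (code_word 0 n)))" using tk Gi by simp
  hence "wm (drop i (code_word 0 n)) = mmul (minv (G (int i))) W"
    using su11_G by (simp add: mmul_assoc[symmetric] minv_mmul_self)
  thus ?thesis using rotate_drop_take[of i "code_word 0 n"] i tk Gi by (simp add: code_word_def wm_append)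
qed

lemma axis_rotate_code_word:
  "i < n \<Longrightarrow> axis (wm (rotate i (code_word 0 n))) = moeb (minv (G (int i))) ` range c"
  using axis_conj[OF geo su11_minv[OF su11_G] su11_W] W_attractors wm_rotate_code_word by simp

lemma Lcyc_eq: "Lcyc a b e n = {moeb (minv (G (int i))) ` range c | i. i < n}"
  unfolding Lcyc_def setcompr_eq_image
  by (rule image_cong) (simp_all add: axis_rotate_code_word[symmetric] code_word_def)

lemma moeb_minv_W_range: "moeb (minv W) ` range c = range c"
proof -
  obtain \<tau> where \<tau>: "\<And>t. moeb W (c t) = c (t + \<tau>)" using moeb_W_shift by blast
  have "moeb (minv W) (c t) = c (t - \<tau>)" for t
  proof -
    have "moeb (minv W) (moeb W (c (t - \<tau>))) = c (t - \<tau>)"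
      using moeb_minv_moeb[OF su11_W] c_in_disk by (simp add: mem_disk_iff less_imp_le)
    thus ?thesis using \<tau>[of "t - \<tau>"] by simp
  qed
  thus ?thesis by (auto simp: image_iff) (metis add_diff_cancel)
qed

lemma lift_G_add_period: "moeb (minv (G (j + int n))) ` range c = moeb (minv (G j)) ` range c"
proof -
  have "moeb (minv (G (j + int n))) z = moeb (minv (G j)) (moeb (minv W) z)" if "z \<in> range c" for z
    using that G_add_period[of j] moeb_mmul[OF su11_minv[OF su11_G] su11_minv[OF su11_W]] c_in_disk
    by (auto simp: minv_mmul mem_disk_iff less_imp_le)
  hence "moeb (minv (G (j + int n))) ` range c = moeb (minv (G j)) ` moeb (minv W) ` range c"
    by (simp add: image_image cong: image_cong)
  thus ?thesis by (simp add: moeb_minv_W_range)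
qed

lemma lift_G_mod: "moeb (minv (G j)) ` range c = moeb (minv (G (j mod int n))) ` range c"
proof -
  have "moeb (minv (G (r + int n * k))) ` range c = moeb (minv (G r)) ` range c" for r k
  proof (induction k rule: int_induct[where k=0])
    case (step1 i) thus ?case using lift_G_add_period[of "r + int n * i"] by (simp add: algebra_simps)
  next
    case (step2 i) thus ?case using lift_G_add_period[of "r + int n * (i - 1)"] by (simp add: algebra_simps)
  qed simp
  thus ?thesis by (metis mod_mult_div_eq mult.commute add.commute)
qed

(* A lift v L_0 meets P exactly when v^-1 P is one of the tiles G j P crossed by L_0; then
   v L_0 = G j^-1 L_0 = G (j mod n)^-1 L_0. *)
lemma lift_meets_fundom_iff:
  assumes v: "v \<in> Gamma a b"
  shows "moeb v ` range c \<inter> fundom a b \<noteq> {} \<longleftrightarrow> moeb v ` range c \<in> Lcyc a b e n"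
proof
  assume "moeb v ` range c \<inter> fundom a b \<noteq> {}"
  then obtain t where "moeb v (c t) \<in> Pdom" by (auto simp: fundom_eq_Pdom)
  moreover have "c t = moeb (minv v) (moeb v (c t))"
    using moeb_minv_moeb[OF Gamma_su11[OF v]] c_in_disk by (simp add: mem_disk_iff less_imp_le)
  ultimately have "c t \<in> tile a b (minv v)" by (metis tile_eq image_eqI)
  then obtain j where "minv v = G j" using tile_containing_c[OF Gamma_minv[OF v]] by metis
  hence "moeb v ` range c = moeb (minv (G (int (nat (j mod int n))))) ` range c"
    using lift_G_mod[of j] n_pos by (metis minv_minv pos_mod_sign of_nat_0_less_iff int_nat_eq)
  moreover have "nat (j mod int n) < n" using n_pos by (simp add: nat_less_iff)
  ultimately show "moeb v ` range c \<in> Lcyc a b e n" unfolding Lcyc_eq by blast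
next
  assume "moeb v ` range c \<in> Lcyc a b e n"
  then obtain i where "moeb v ` range c = moeb (minv (G (int i))) ` range c" by (auto simp: Lcyc_eq)
  moreover have "moeb (minv (G (int i))) (c (s (int i))) \<in> Pdom"
    using c_in_moeb_image_iff[OF G_in_Gamma Pdom_subset_disk] c_in_tile[of "int i" "s (int i)"] s_mono
    by (simp add: tile_eq pullback_def)
  ultimately show "moeb v ` range c \<inter> fundom a b \<noteq> {}" unfolding fundom_eq_Pdom by blast
qed

end

theorem proposition1:
  fixes a b g h0 :: mat and c :: "real \<Rightarrow> complex" and e :: "int \<Rightarrow> letter" and n :: nat
    and L :: "complex set"
  assumes "schottky a b"
    and "g \<in> Gamma a b" and "moeb g \<noteq> id"
    and "h0 \<in> Gamma a b"
    and "geodesic_param c (repelling_fp (mmul (mmul h0 g) (minv h0)))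
                          (attracting_fp (mmul (mmul h0 g) (minv h0)))"
    and "coding a b c e"
    and "n > 0" and "\<forall>k. e (k + int n) = e k"
    and "L \<in> lifts a b g"
  shows "L \<inter> fundom a b \<noteq> {} \<longleftrightarrow> L \<in> Lcyc a b e n"
proof -
  interpret schottky_pair a b using assms(1) by unfold_locales
  define h where "h = mmul (mmul h0 g) (minv h0)"
  have hG: "h \<in> Gamma a b" using assms(2,4) Gamma_mmul Gamma_minv by (simp add: h_def)
  have h0: "su11 h0" and g: "su11 g" using assms(2,4) Gamma_su11 by auto
  have "\<exists>z\<in>disk. moeb h z \<noteq> z" using moeb_conj_eq_id[OF h0 g] assms(3) by (auto simp: h_def)
  hence ends: "attractor h (attracting_fp h)" "attractor (minv h) (repelling_fp h)"
    using axis_ends_attractors[OF Gamma_su11[OF hG] _ assms(5)[folded h_def]] by auto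
  obtain s G where "strict_mono s" "filterlim s at_top at_top" "filterlim s at_bot at_bot"
    "G 0 = mid" "\<forall>k. G (k + 1) = mmul (G k) (letter_mat a b (e k))"
    "\<forall>k. c ` {s k .. s (k + 1)} \<subseteq> tile a b (G k)"
    using assms(6) unfolding coding_def by blast
  then interpret periodic_coded_lift a b h c "repelling_fp h" "attracting_fp h" s G e n
    using hG assms(1,5,7,8) ends \<open>\<exists>z\<in>disk. moeb h z \<noteq> z\<close> by unfold_locales (auto simp: h_def)
  obtain u where u: "u \<in> Gamma a b" and L: "L = axis (mmul (mmul u g) (minv u))"
    using assms(9) by (auto simp: lifts_def)
  have v: "mmul u (minv h0) \<in> Gamma a b" using Gamma_mmul[OF u Gamma_minv[OF assms(4)]] .
  have "mmul (mmul u (minv h0)) h0 = u" using h0 by (simp add: mmul_assoc minv_mmul_self)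
  hence "L = axis (mmul (mmul (mmul u (minv h0)) h) (minv (mmul u (minv h0))))"
    using L by (simp add: h_def conj_conj)
  also have "\<dots> = moeb (mmul u (minv h0)) ` range c" using axis_conj[OF geo Gamma_su11[OF v] su11_h ends] .
  finally show ?thesis using lift_meets_fundom_iff[OF v] by simp
qed

end
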